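(* Let $(X,\mu)$ be a non-atomic probability measure space equipped with a tree $\mathcal{T}$, and let $\mathcal{M}_{\mathcal{T}}$ be the associated dyadic maximal operator. Let $0<q<1$ and let $f,h$ be real numbers with $0<h\le f^q$. Define $$B_q(f,h)=\sup\Big\{\int_X (\mathcal{M}_{\mathcal{T}}\phi)^q\,d\mu \;:\; \phi\in L^1(X,\mu),\ \phi\ge 0,\ \int_X\phi\,d\mu=f,\ \int_X\phi^q\,d\mu=h\Big\}.$$ Then $B_q(f,h)=h\,\omega_q(f^q/h)$, where $\omega_q:[1,+\infty)\to[1,+\infty)$ is defined by $\omega_q(z)=[H_q^{-1}(z)]^q$ and $H_q(z)=(1-q)z^q+qz^{q-1}$ for $z\ge 1$.
   Context: A set $\mathcal{T}$ of measurable subsets of $X$ is a tree if: (i) $X\in\mathcal{T}$ and $\mu(I)>0$ for every $I\in\mathcal{T}$; (ii) for every $I\in\mathcal{T}$ there is a finite or countable set $C(I)\subseteq\mathcal{T}$ with at least two elements, consisting of pairwise disjoint subsets of $I$ whose union is $I$; (iii) $\mathcal{T}=\bigcup_{m\ge0}\mathcal{T}_{(m)}$ where $\mathcal{T}_{(0)}=\{X\}$ and $\mathcal{T}_{(m+1)}=\bigcup_{I\in\mathcal{T}_{(m)}}C(I)$; (iv) $\lim_{m\to\infty}\sup_{I\in\mathcal{T}_{(m)}}\mu(I)=0$. The dyadic maximal operator is $\mathcal{M}_{\mathcal{T}}\phi(x)=\sup\{\frac{1}{\mu(I)}\int_I|\phi|\,d\mu : x\in I\in\mathcal{T}\}$ for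 $\phi\in L^1(X,\mu)$. The function $H_q$ is a strictly increasing bijection of $[1,\infty)$ onto $[1,\infty)$, so $H_q^{-1}$ is well defined. *)

theory Defs
  imports "HOL-Probability.Probability"
begin

definition nonatomic :: "'a measure \<Rightarrow> bool" where
  "nonatomic M \<longleftrightarrow> (\<forall>A\<in>sets M. measure M A > 0 \<longrightarrow>
      (\<exists>B\<in>sets M. B \<subseteq> A \<and> 0 < measure M B \<and> measure M B < measure M A))"

primrec tree_level :: "'a set \<Rightarrow> ('a set \<Rightarrow> 'a set set) \<Rightarrow> nat \<Rightarrow> 'a set set" where
  "tree_level X C 0 = {X}"
| "tree_level X C (Suc m) = (\<Union>I\<in>tree_level X C m. C I)"

definition tree_with :: "'a measure \<Rightarrow> 'a set set \<Rightarrow> ('a set \<Rightarrow> 'a set set) \<Rightarrow> bool" where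
  "tree_with M T C \<longleftrightarrow>
     space M \<in> T \<and>
     (\<forall>I\<in>T. I \<in> sets M \<and> measure M I > 0) \<and>
     (\<forall>I\<in>T. C I \<subseteq> T \<and> countable (C I) \<and> (\<exists>J\<in>C I. \<exists>K\<in>C I. J \<noteq> K) \<and>
             pairwise disjnt (C I) \<and> (\<forall>J\<in>C I. J \<subseteq> I) \<and> \<Union>(C I) = I) \<and>
     T = (\<Union>m. tree_level (space M) C m) \<and>
     (\<lambda>m. SUP I\<in>tree_level (space M) C m. measure M I) \<longlonglongrightarrow> 0"

definition is_tree :: "'a measure \<Rightarrow> 'a set set \<Rightarrow> bool" where
  "is_tree M T \<longleftrightarrow> (\<exists>C. tree_with M T C)"

text \<open>Dyadic maximal operator, valued in the extended nonnegative reals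
(the supremum may be infinite on a null set).\<close>
definition dyadic_max :: "'a measure \<Rightarrow> 'a set set \<Rightarrow> ('a \<Rightarrow> real) \<Rightarrow> 'a \<Rightarrow> ennreal" where
  "dyadic_max M T \<phi> x =
     (SUP I\<in>{I\<in>T. x \<in> I}. ennreal (1 / measure M I) * (\<integral>\<^sup>+ y\<in>I. ennreal \<bar>\<phi> y\<bar> \<partial>M))"

definition ennpow :: "ennreal \<Rightarrow> real \<Rightarrow> ennreal" where
  "ennpow a q = (if a = \<top> then \<top> else ennreal (enn2real a powr q))"

definition Bellman_q :: "'a measure \<Rightarrow> 'a set set \<Rightarrow> real \<Rightarrow> real \<Rightarrow> real \<Rightarrow> ennreal" where
  "Bellman_q M T q f h =
     (SUP \<phi>\<in>{\<phi>. integrable M \<phi> \<and> (\<forall>x\<in>space M. \<phi> x \<ge> 0) \<and>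
                (\<integral>x. \<phi> x \<partial>M) = f \<and> (\<integral>x. \<phi> x powr q \<partial>M) = h}.
        \<integral>\<^sup>+ x. ennpow (dyadic_max M T \<phi> x) q \<partial>M)"

definition H_q :: "real \<Rightarrow> real \<Rightarrow> real" where
  "H_q q z = (1 - q) * z powr q + q * z powr (q - 1)"

definition omega_q :: "real \<Rightarrow> real \<Rightarrow> real" where
  "omega_q q z = (the_inv_into {1..} (H_q q) z) powr q"

end

theory Submission
  imports Defs
begin

text \<open>Upper bound: write \<open>\<psi> = \<M>\<^sub>\<T>\<phi>\<close>. The weak-type estimate of the dyadic maximal operator,
  integrated against \<open>l\<^sup>q\<^sup>-\<^sup>2 dl\<close> over \<open>l > f\<close> (Tonelli), gives
  \<open>(1 - q) \<integral>\<psi>\<^sup>q + q \<integral>\<phi>\<psi>\<^sup>q\<^sup>-\<^sup>1 \<le> f\<^sup>q\<close>. Bounding \<open>(\<phi>/\<psi>)\<^sup>q\<close> by its tangent line at any \<open>x > 0\<close> gives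
  \<open>h \<le> q x\<^sup>q\<^sup>-\<^sup>1 \<integral>\<phi>\<psi>\<^sup>q\<^sup>-\<^sup>1 + (1 - q) x\<^sup>q \<integral>\<psi>\<^sup>q\<close>; eliminating \<open>\<integral>\<phi>\<psi>\<^sup>q\<^sup>-\<^sup>1\<close> and taking \<open>x = 1/z\<close> with
  \<open>H\<^sub>q(z) = f\<^sup>q/h\<close> yields \<open>\<integral>\<psi>\<^sup>q \<le> h \<omega>\<^sub>q(f\<^sup>q/h)\<close>.

  Sharpness: since the cells of the tree become arbitrarily small, every cell contains a
  disjoint family of subcells carrying any prescribed fraction \<open>b\<close> of its measure. Iterating
  gives nested sets \<open>A\<^sub>k\<close>, unions of cells, with \<open>\<mu>(J \<inter> A\<^sub>k\<^sub>+\<^sub>m) = b\<^sup>m \<mu>(J)\<close> for each cell \<open>J\<close> of \<open>A\<^sub>k\<close>.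
  For \<open>\<phi> = c r\<^sup>k\<close> on \<open>A\<^sub>k - A\<^sub>k\<^sub>+\<^sub>1\<close> all integrals are geometric series, and \<open>\<M>\<^sub>\<T>\<phi>\<close> is at least
  the mean of \<open>\<phi>\<close> over the cells of \<open>A\<^sub>k\<close>, which is proportional to \<open>r\<^sup>k\<close>. Letting \<open>b \<rightarrow> 1\<close>
  with \<open>r\<close> adjusted to keep \<open>f\<^sup>q/h\<close> fixed, \<open>\<integral>(\<M>\<^sub>\<T>\<phi>)\<^sup>q\<close> approaches \<open>h \<omega>\<^sub>q(f\<^sup>q/h)\<close>.\<close>

section \<open>Elementary inequalities and the function \<open>H\<^sub>q\<close>\<close>

lemma powr_le_linear:
  fixes q v :: real
  assumes "0 < q" "q < 1" "0 \<le> v"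
  shows "v powr q \<le> q * v + (1 - q)"
proof (cases "v = 0")
  case True then show ?thesis using assms by simp
next
  case False
  then show ?thesis
    using Youngs_inequality_0[of q "1-q" v 1] assms by simp
qed

lemma powr_le_tangent_line:
  fixes q x x0 :: real
  assumes "0 < q" "q < 1" "0 \<le> x" "0 < x0"
  shows "x powr q \<le> q * x0 powr (q - 1) * x + (1 - q) * x0 powr q"
proof -
  have "(x / x0) powr q \<le> q * (x / x0) + (1 - q)"
    using powr_le_linear[of q "x/x0"] assms by simp
  then have "x0 powr q * (x / x0) powr q \<le> x0 powr q * (q * (x / x0) + (1 - q))"
    by (intro mult_left_mono) auto
  moreover have "x0 powr q * (x / x0) powr q = x powr q"
    using assms by (simp add: powr_divide)
  moreover have "x0 powr q * (q * (x / x0) + (1 - q)) = q * x0 powr (q - 1) * x + (1 - q) * x0 powr q"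
    using assms by (simp add: powr_diff field_simps)
  ultimately show ?thesis by simp
qed

lemma powr_ge_taylor2:
  fixes q r :: real
  assumes "0 < q" "q < 1" "1 \<le> r"
  shows "1 + q * (r - 1) - q * (1 - q) / 2 * (r - 1)^2 \<le> r powr q"
proof -
  define D' where "D' = (\<lambda>x::real. q * x powr (q - 1) - q + q * (1 - q) * (x - 1))"
  define D where "D = (\<lambda>x::real. x powr q - 1 - q * (x - 1) + q * (1 - q) / 2 * (x - 1)^2)"
  have D'_mono: "D' 1 \<le> D' x" if "1 \<le> x" for x
  proof (rule DERIV_nonneg_imp_nondecreasing[OF that])
    fix y assume y: "1 \<le> y" "y \<le> x"
    have der: "DERIV D' y :> q * ((q - 1) * y powr (q - 1 - 1)) + q * (1 - q)"
      unfolding D'_def using y by (auto intro!: derivative_eq_intros)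
    have "y powr (q - 1 - 1) \<le> 1"
      using y assms powr_mono2'[of "q-1-1" 1 y] by simp
    moreover have "q * ((q - 1) * y powr (q - 1 - 1)) + q * (1 - q) = q * (1 - q) * (1 - y powr (q - 1 - 1))"
      by (simp add: algebra_simps)
    ultimately have "0 \<le> q * ((q - 1) * y powr (q - 1 - 1)) + q * (1 - q)"
      using assms by (simp add: mult_nonneg_nonneg)
    with der show "\<exists>d. DERIV D' y :> d \<and> 0 \<le> d" by blast
  qed
  have "D 1 \<le> D r"
  proof (rule DERIV_nonneg_imp_nondecreasing[OF assms(3)])
    fix y assume y: "1 \<le> y" "y \<le> r"
    have "DERIV D y :> D' y"
      unfolding D_def D'_def using y
      by (auto intro!: derivative_eq_intros simp: power2_eq_square)
    moreover have "0 \<le> D' y" using D'_mono[of y] y by (simp add: D'_def)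
    ultimately show "\<exists>d. DERIV D y :> d \<and> 0 \<le> d" by blast
  qed
  then show ?thesis by (simp add: D_def)
qed

lemma H_q_one: "H_q q 1 = 1"
  by (simp add: H_q_def)

lemma H_q_strict_mono:
  assumes "0 < q" "q < 1" "1 \<le> a" "a < b"
  shows "H_q q a < H_q q b"
proof (rule DERIV_pos_imp_increasing_open[OF assms(4)])
  fix x assume x: "a < x" "x < b"
  then have x1: "1 < x" using assms by simp
  have "DERIV (H_q q) x :> (1 - q) * (q * x powr (q - 1)) + q * ((q - 1) * x powr (q - 1 - 1))"
    unfolding H_q_def[abs_def] using x1 by (auto intro!: derivative_eq_intros)
  moreover have "(1 - q) * (q * x powr (q - 1)) + q * ((q - 1) * x powr (q - 1 - 1))
      = q * (1 - q) * (x powr (q - 1) - x powr (q - 1 - 1))"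
    by (simp add: algebra_simps)
  moreover have "x powr (q - 1 - 1) < x powr (q - 1)"
    using x1 by (intro powr_less_mono) auto
  ultimately show "\<exists>y. DERIV (H_q q) x :> y \<and> 0 < y"
    using assms by (metis diff_gt_0_iff_gt mult_pos_pos)
next
  show "continuous_on {a..b} (H_q q)"
    unfolding H_q_def[abs_def] using assms by (intro continuous_intros) auto
qed

lemma H_q_less_iff:
  assumes "0 < q" "q < 1" "1 \<le> a" "1 \<le> b"
  shows "H_q q a < H_q q b \<longleftrightarrow> a < b"
  using H_q_strict_mono[OF assms(1,2,3)] H_q_strict_mono[OF assms(1,2,4)] assms
  by (metis less_le_not_le linorder_less_linear)

lemma H_q_surj:
  assumes "0 < q" "q < 1" "1 \<le> u"
  obtains z where "1 \<le> z" "H_q q z = u"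
proof -
  define b where "b = max 1 ((u / (1 - q)) powr (1 / q))"
  have b1: "1 \<le> b" by (simp add: b_def)
  have "u = (1 - q) * ((u / (1 - q)) powr (1 / q)) powr q"
    using assms by (simp add: powr_powr)
  also have "\<dots> \<le> (1 - q) * b powr q"
    using assms by (intro mult_left_mono powr_mono2) (auto simp: b_def)
  also have "\<dots> \<le> H_q q b" using assms b1 by (simp add: H_q_def)
  finally have "u \<le> H_q q b" .
  then have "\<exists>z. 1 \<le> z \<and> z \<le> b \<and> H_q q z = u"
    using assms b1
    by (intro IVT') (auto simp: H_q_one H_q_def[abs_def] intro!: continuous_intros)
  then show ?thesis using that by blast
qed

lemma omega_q_eqI:
  assumes "0 < q" "q < 1" "1 \<le> z" "H_q q z = u"
  shows "omega_q q u = z powr q"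
proof -
  have "inj_on (H_q q) {1..}"
    using H_q_strict_mono[OF assms(1,2)] by (intro inj_onI) (metis atLeast_iff linorder_neq_iff)
  then have "the_inv_into {1..} (H_q q) u = z"
    using assms by (intro the_inv_into_f_eq) auto
  then show ?thesis by (simp add: omega_q_def)
qed

lemma le_of_tangent_bound_at_inverse:
  fixes q F h L z :: real
  assumes q: "0 < q" "q < 1" and h: "0 < h" and z: "1 < z" and Hz: "H_q q z = F / h"
    and Y: "h \<le> (1 / z) powr (q - 1) * (F - (1 - q) * L) + (1 - q) * (1 / z) powr q * L"
  shows "L \<le> h * z powr q"
proof -
  define A where "A = z powr (1 - q)"
  define B where "B = z powr q"
  have B: "0 < B" using z by (simp add: B_def)
  have AB: "A * B = z" using z by (simp add: A_def B_def flip: powr_add)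
  have x1: "(1 / z) powr (q - 1) = A" using z
    by (simp add: A_def powr_divide) (metis minus_diff_eq powr_minus_divide)
  have x2: "(1 / z) powr q = 1 / B" using z by (simp add: B_def powr_divide)
  have "h * B \<le> B * (A * (F - (1 - q) * L) + (1 - q) * (1 / B) * L)"
    using Y B by (simp add: x1 x2 mult.commute)
  also have "\<dots> = z * F - (1 - q) * L * (z - 1)"
    using B by (simp add: AB[symmetric] field_simps)
  finally have i1: "h * B \<le> z * F - (1 - q) * L * (z - 1)" .
  have "H_q q z = (1 - q) * B + q * B / z"
    using z by (simp add: H_q_def B_def powr_diff)
  then have "z * F = h * B * ((1 - q) * z + q)"
    using Hz h z by (simp add: field_simps)
  with i1 have "(1 - q) * (z - 1) * L \<le> (1 - q) * (z - 1) * (h * B)"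
    by (simp add: algebra_simps)
  then show ?thesis
    using q z by (simp add: mult_le_cancel_left B_def)
qed

lemma le_of_tangent_bound_at_one:
  fixes q h L :: real
  assumes q: "0 < q" "q < 1"
    and Y: "\<And>x. 0 < x \<Longrightarrow> h \<le> x powr (q - 1) * (h - (1 - q) * L) + (1 - q) * x powr q * L"
  shows "L \<le> h"
proof (rule ccontr)
  assume "\<not> L \<le> h"
  define g where "g = (\<lambda>x::real. (1 - q) * L * (x powr (q - 1) - x powr q) - (x powr (q - 1) - 1) * h)"
  have g_nonpos: "g x \<le> 0" if "0 < x" for x
    using Y[OF that] by (simp add: g_def algebra_simps)
  have "DERIV g 1 :> (1 - q) * L * ((q - 1) - q) - (q - 1) * h"
    unfolding g_def by (auto intro!: derivative_eq_intros)
  moreover have "(1 - q) * L * ((q - 1) - q) - (q - 1) * h = (1 - q) * (h - L)"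
    by (simp add: algebra_simps)
  moreover have "(1 - q) * (h - L) < 0" using q \<open>\<not> L \<le> h\<close> by (simp add: mult_pos_neg)
  ultimately obtain d where d: "d > 0" "\<And>e. e > 0 \<Longrightarrow> e < d \<Longrightarrow> g 1 < g (1 - e)"
    using DERIV_neg_dec_left by metis
  define e where "e = min (d / 2) (1 / 2)"
  have "g 1 < g (1 - e)" using d by (intro d(2)) (auto simp: e_def)
  moreover have "g (1 - e) \<le> 0" by (intro g_nonpos) (auto simp: e_def)
  ultimately show False by (simp add: g_def)
qed

text \<open>The optimal tangent point is \<open>x = 1/z\<close> with \<open>H\<^sub>q(z) = F/h\<close>; when \<open>z = 1\<close> this point gives
  no information and a first-order argument at \<open>x = 1\<close> is used instead.\<close>
lemma le_h_omega_q:
  fixes q F h L P :: real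
  assumes q: "0 < q" "q < 1" and h: "0 < h" "h \<le> F"
    and U: "(1 - q) * L + q * P \<le> F"
    and Y: "\<And>x. 0 < x \<Longrightarrow> h \<le> q * x powr (q - 1) * P + (1 - q) * x powr q * L"
  shows "L \<le> h * omega_q q (F / h)"
proof -
  have u1: "1 \<le> F / h" using h by simp
  obtain z where z: "1 \<le> z" "H_q q z = F / h" using H_q_surj[OF q u1] by blast
  have Y': "h \<le> x powr (q - 1) * (F - (1 - q) * L) + (1 - q) * x powr q * L" if "0 < x" for x
  proof -
    have "q * x powr (q - 1) * P = x powr (q - 1) * (q * P)" by simp
    also have "\<dots> \<le> x powr (q - 1) * (F - (1 - q) * L)"
      using U by (intro mult_left_mono) auto
    finally show ?thesis using Y[OF that] by linarith
  qed
  show ?thesis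
  proof (cases "z = 1")
    case True
    then have "F = h" using z h by (simp add: H_q_one)
    then show ?thesis
      using le_of_tangent_bound_at_one[OF q, of h L] Y' True omega_q_eqI[OF q z] by simp
  next
    case False
    then show ?thesis
      using le_of_tangent_bound_at_inverse[OF q h(1) _ z(2) Y'] z omega_q_eqI[OF q z] by simp
  qed
qed

lemma one_minus_powr_mult_ge:
  fixes q b r :: real
  assumes q: "0 < q" "q < 1" and b: "0 < b" "b < 1" and r: "1 \<le> r" "r * b \<le> 1"
  shows "(1 - q) * (1 - b) \<le> 1 - r powr q * b"
proof -
  have "r powr q \<le> q * r + (1 - q)" using powr_le_linear[of q r] q r by simp
  then have "b * r powr q \<le> b * (q * r + (1 - q))" using b by (intro mult_left_mono) auto
  also have "\<dots> = q * (r * b) + b * (1 - q)" by (simp add: algebra_simps)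
  also have "\<dots> \<le> q * 1 + b * (1 - q)" using q r b by (intro add_mono mult_left_mono) auto
  finally show ?thesis by (simp add: algebra_simps)
qed

text \<open>\<open>((1 - b) / (1 - r b))\<^sup>q (1 - r\<^sup>q b) / (1 - b)\<close> is the ratio \<open>f\<^sup>q / h\<close> of the extremal
  function constructed below; as \<open>r\<close> runs from \<open>1\<close> to \<open>1/b\<close> it takes every value \<open>\<ge> 1\<close>.\<close>
lemma extremal_ratio_surj:
  fixes q b u :: real
  assumes q: "0 < q" "q < 1" and b: "0 < b" "b < 1" and u: "1 \<le> u"
  obtains r where "1 \<le> r" "r * b < 1"
    "((1 - b) / (1 - r * b)) powr q * (1 - r powr q * b) / (1 - b) = u"
proof -
  define g where "g = (\<lambda>r. ((1 - b) / (1 - r * b)) powr q * (1 - r powr q * b) / (1 - b))"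
  define W where "W = max 1 ((u / (1 - q)) powr (1 / q))"
  have W1: "1 \<le> W" by (simp add: W_def)
  define r1 where "r1 = (1 - (1 - b) / W) / b"
  have r1b: "r1 * b = 1 - (1 - b) / W" using b by (simp add: r1_def)
  have r1b1: "r1 * b < 1" using b W1 r1b by simp
  have "(1 - b) / W \<le> 1 - b" using b W1 by (simp add: divide_le_eq mult_le_cancel_left2 le_divide_eq)
  then have "b \<le> r1 * b" using r1b by simp
  then have r1: "1 \<le> r1" using b by simp
  have w1: "(1 - b) / (1 - r1 * b) = W" using b W1 by (simp add: r1b)
  have "u = (1 - q) * ((u / (1 - q)) powr (1 / q)) powr q"
    using q u by (simp add: powr_powr)
  also have "\<dots> \<le> (1 - q) * W powr q"
    using q u by (intro mult_left_mono powr_mono2) (auto simp: W_def)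
  also have "\<dots> = W powr q * ((1 - q) * (1 - b)) / (1 - b)" using b by simp
  also have "\<dots> \<le> W powr q * (1 - r1 powr q * b) / (1 - b)"
    using one_minus_powr_mult_ge[OF q b r1] r1b1 b by (intro divide_right_mono mult_left_mono) auto
  also have "\<dots> = g r1" by (simp add: g_def w1)
  finally have ur1: "u \<le> g r1" .
  have g1: "g 1 = 1" using b by (simp add: g_def)
  have "\<forall>x\<in>{1..r1}. x * b < 1"
    using r1b1 b by (auto intro: le_less_trans[of _ "r1 * b"] simp: mult_right_mono)
  then have "continuous_on {1..r1} g"
    unfolding g_def using b by (intro continuous_intros) (auto simp: field_simps)
  then obtain r where r: "1 \<le> r" "r \<le> r1" "g r = u"
    using IVT'[of g 1 u r1, OF _ ur1 r1] g1 u by auto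
  have "r * b < 1" using r(2) b r1b1 by (meson le_less_trans mult_right_mono less_imp_le)
  then show ?thesis using r that by (auto simp: g_def)
qed

text \<open>A second-order Taylor estimate shows that the extremal ratio \<open>u\<close> and \<open>H\<^sub>q(w)\<close> differ
  by \<open>O(1 - b)\<close>, so \<open>w\<close> approximates \<open>H\<^sub>q\<^sup>-\<^sup>1(u)\<close> as \<open>b \<rightarrow> 1\<close>.\<close>
lemma extremal_ratio_minus_H_q:
  fixes q b r w u :: real
  assumes q: "0 < q" "q < 1" and b: "1 / 2 \<le> b" "b < 1" and r: "1 \<le> r" "r * b < 1"
    and w: "w = (1 - b) / (1 - r * b)" and u: "u = w powr q * (1 - r powr q * b) / (1 - b)"
  shows "u - H_q q w \<le> q * (1 - b) * u"
proof -
  have wpos: "0 < w" using b r by (simp add: w)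
  have wq_le: "(1 - q) * w powr q \<le> u"
  proof -
    have "(1 - q) * w powr q = w powr q * ((1 - q) * (1 - b)) / (1 - b)" using b by simp
    also have "\<dots> \<le> u"
      unfolding u using one_minus_powr_mult_ge[OF q _ b(2) r(1)] r b
      by (intro divide_right_mono mult_left_mono) auto
    finally show ?thesis .
  qed
  have u0: "0 \<le> u" by (rule order_trans[OF _ wq_le]) (use q in simp)
  have Hw: "H_q q w = w powr q * ((1 - q) + q * (1 - r * b) / (1 - b))"
    using wpos b r by (simp add: H_q_def powr_diff w field_simps)
  have diff: "u - H_q q w = w powr q * b / (1 - b) * (q * (r - 1) - (r powr q - 1))"
  proof -
    have "W * (1 - R * (1 - c)) / c - W * ((1 - q) + q * (1 - r * (1 - c)) / c)
        = W * (1 - c) / c * (q * (r - 1) - (R - 1))" if "c \<noteq> 0" for W R c :: real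
      using that by (simp add: field_simps)
    from this[of "1 - b" "w powr q" "r powr q"] b show ?thesis unfolding u Hw by simp
  qed
  have tay: "q * (r - 1) - (r powr q - 1) \<le> q * (1 - q) / 2 * (r - 1)^2"
    using powr_ge_taylor2[OF q r(1)] by simp
  have "r - 1 \<le> (1 - b) / b"
    using r b by (simp add: field_simps)
  then have sq: "(r - 1)^2 \<le> ((1 - b) / b)^2"
    using r by (intro power_mono) auto
  have "u - H_q q w \<le> w powr q * b / (1 - b) * (q * (1 - q) / 2 * (r - 1)^2)"
    unfolding diff using b tay by (intro mult_left_mono) auto
  also have "\<dots> \<le> (u / (1 - q)) * b / (1 - b) * (q * (1 - q) / 2 * ((1 - b) / b)^2)"
  proof (intro mult_mono divide_right_mono)
    show "w powr q \<le> u / (1 - q)" using wq_le q by (simp add: field_simps)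
  qed (use b q sq u0 in \<open>auto intro: mult_left_mono\<close>)
  also have "\<dots> = u * q / 2 * ((1 - b) / b)"
  proof -
    have "(u / p) * b / c * (q * p / 2 * (c / b)^2) = u * q / 2 * (c / b)"
      if "c \<noteq> 0" "p \<noteq> 0" "b \<noteq> 0" for c p :: real
      using that by (simp add: field_simps power2_eq_square)
    from this[of "1 - b" "1 - q"] b q show ?thesis by simp
  qed
  also have "\<dots> \<le> u * q / 2 * (2 * (1 - b))"
  proof (intro mult_left_mono)
    have "0 \<le> (1 - b) * (2 * b - 1)" using b by (intro mult_nonneg_nonneg) auto
    then have "1 - b \<le> 2 * (1 - b) * b" by (simp add: algebra_simps)
    then show "(1 - b) / b \<le> 2 * (1 - b)" using b by (simp add: divide_le_eq)
  qed (use q u0 in auto)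
  finally show ?thesis by (simp add: algebra_simps)
qed

lemma extremal_params_exist:
  fixes q u e :: real
  assumes q: "0 < q" "q < 1" and u: "1 \<le> u" and e: "0 < e"
  obtains b r where "0 < b" "b < 1" "1 \<le> r" "r * b < 1"
    "((1 - b) / (1 - r * b)) powr q * (1 - r powr q * b) / (1 - b) = u"
    "omega_q q u - e < ((1 - b) / (1 - r * b)) powr q"
proof -
  obtain z where z: "1 \<le> z" "H_q q z = u" using H_q_surj[OF q u] by blast
  have om: "omega_q q u = z powr q" using omega_q_eqI[OF q z] .
  define w0 where "w0 = (max 1 (z powr q - e/2)) powr (1 / q)"
  have w01: "1 \<le> w0" unfolding w0_def by (intro ge_one_powr_ge_zero) (use q in auto)
  have w0q: "w0 powr q = max 1 (z powr q - e/2)" using q by (simp add: w0_def powr_powr)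
  have "w0 powr q \<le> z powr q" using w0q z q e ge_one_powr_ge_zero[of z q] by simp
  then have w0z: "w0 \<le> z" using q w01 z powr_less_mono2[of q z w0] by force
  define d where "d = (if w0 < z then u - H_q q w0 else 1)"
  have d: "0 < d" using H_q_strict_mono[OF q w01] z by (auto simp: d_def)
  define b where "b = max (1/2) (1 - d / (2 * u * q))"
  have b: "0 < b" "b < 1" "1 / 2 \<le> b" using d q u by (auto simp: b_def)
  have bd: "q * (1 - b) * u < d"
  proof -
    have "1 - b \<le> d / (2 * u * q)" by (simp add: b_def)
    then have "u * q * (1 - b) \<le> u * q * (d / (2 * u * q))"
      using q u by (intro mult_left_mono) auto
    also have "\<dots> = d / 2" using q u by simp
    finally show ?thesis using d by (simp add: algebra_simps)
  qed
  obtain r where r: "1 \<le> r" "r * b < 1"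
    and gr: "((1 - b) / (1 - r * b)) powr q * (1 - r powr q * b) / (1 - b) = u"
    using extremal_ratio_surj[OF q b(1,2) u] by blast
  define w where "w = (1 - b) / (1 - r * b)"
  have w1: "1 \<le> w" using b r by (simp add: w_def le_divide_eq mult_le_cancel_right1)
  have "omega_q q u - e < w powr q"
  proof (cases "w0 < z")
    case False
    then have "z powr q - e/2 \<le> 1" using w0z w0q e by (auto simp: max_def split: if_splits)
    then show ?thesis using om ge_one_powr_ge_zero[OF w1, of q] q e by simp
  next
    case True
    have "u - H_q q w < u - H_q q w0"
      using extremal_ratio_minus_H_q[OF q b(3,2) r w_def gr[folded w_def, symmetric]] bd True
      by (simp add: d_def)
    then have "w0 < w" using H_q_less_iff[OF q w01 w1] by simp
    then have "w0 powr q < w powr q" using q w01 by (simp add: powr_less_mono2)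
    then show ?thesis using w0q e om by simp
  qed
  then show ?thesis using that b r gr unfolding w_def by blast
qed

section \<open>Measure-theoretic lemmas\<close>

lemma nn_integral_FTC_open_interval:
  fixes F g :: "real \<Rightarrow> real" and a b :: real
  assumes ab: "a \<le> b"
    and deriv: "\<And>x. a \<le> x \<Longrightarrow> x \<le> b \<Longrightarrow> DERIV F x :> g x"
    and cont: "\<And>x. a \<le> x \<Longrightarrow> x \<le> b \<Longrightarrow> isCont g x"
    and nonneg: "\<And>x. a \<le> x \<Longrightarrow> x \<le> b \<Longrightarrow> 0 \<le> g x"
  shows "(\<integral>\<^sup>+l. ennreal (if a < l \<and> l < b then g l else 0) \<partial>lborel) = ennreal (F b - F a)"
proof -
  have "has_bochner_integral lborel (\<lambda>x. g x * indicator {a .. b} x) (F b - F a)"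
    using has_bochner_integral_FTC_Icc_real[OF ab deriv cont] by auto
  then have int: "integrable lborel (\<lambda>x. g x * indicator {a .. b} x)"
    and ieq: "(\<integral>x. g x * indicator {a .. b} x \<partial>lborel) = F b - F a"
    by (auto simp: has_bochner_integral_iff)
  have "(\<integral>\<^sup>+l. ennreal (if a < l \<and> l < b then g l else 0) \<partial>lborel)
      = (\<integral>\<^sup>+l. ennreal (g l * indicator {a .. b} l) \<partial>lborel)"
  proof (rule nn_integral_cong_AE)
    show "AE l in lborel. ennreal (if a < l \<and> l < b then g l else 0) = ennreal (g l * indicator {a .. b} l)"
      using AE_lborel_singleton[of a] AE_lborel_singleton[of b]
      by eventually_elim (auto simp: indicator_def)
  qed
  also have "\<dots> = ennreal (F b - F a)"
    using nn_integral_eq_integral[OF int] nonneg ieq by (simp add: indicator_def)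
  finally show ?thesis .
qed

lemma nn_integral_powr_q_minus_1:
  fixes q f Y :: real
  assumes q: "0 < q" "q < 1" and f: "0 < f" "f \<le> Y"
  shows "(\<integral>\<^sup>+l. ennreal (if f < l \<and> l < Y then l powr (q - 1) else 0) \<partial>lborel)
     = ennreal ((Y powr q - f powr q) / q)"
proof -
  have "(\<integral>\<^sup>+l. ennreal (if f < l \<and> l < Y then l powr (q - 1) else 0) \<partial>lborel)
     = ennreal (Y powr q / q - f powr q / q)"
  proof (rule nn_integral_FTC_open_interval[OF f(2)])
    fix x assume "f \<le> x" "x \<le> Y"
    then have x0: "0 < x" using f by simp
    show "DERIV (\<lambda>x. x powr q / q) x :> x powr (q - 1)"
      using x0 q by (auto intro!: derivative_eq_intros)
    show "isCont (\<lambda>l. l powr (q - 1)) x" using x0 by (auto intro!: continuous_intros)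
  qed simp
  then show ?thesis by (simp add: diff_divide_distrib)
qed

lemma nn_integral_powr_q_minus_2:
  fixes q f Y :: real
  assumes q: "0 < q" "q < 1" and f: "0 < f" "f \<le> Y"
  shows "(\<integral>\<^sup>+l. ennreal (if f < l \<and> l < Y then l powr (q - 2) else 0) \<partial>lborel)
     = ennreal ((f powr (q - 1) - Y powr (q - 1)) / (1 - q))"
proof -
  have q1: "q - 1 \<noteq> 0" using q by auto
  have "(\<integral>\<^sup>+l. ennreal (if f < l \<and> l < Y then l powr (q - 2) else 0) \<partial>lborel)
     = ennreal (Y powr (q - 1) / (q - 1) - f powr (q - 1) / (q - 1))"
  proof (rule nn_integral_FTC_open_interval[OF f(2)])
    fix x assume "f \<le> x" "x \<le> Y"
    then have x0: "0 < x" using f by simp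
    have "DERIV (\<lambda>x. x powr (q - 1) / (q - 1)) x :> (q - 1) * x powr (q - 1 - 1) / (q - 1)"
      using x0 by (auto intro!: derivative_eq_intros)
    then show "DERIV (\<lambda>x. x powr (q - 1) / (q - 1)) x :> x powr (q - 2)"
      using q1 by (simp add: diff_diff_eq)
    show "isCont (\<lambda>l. l powr (q - 2)) x" using x0 by (auto intro!: continuous_intros)
  qed simp
  also have "Y powr (q - 1) / (q - 1) - f powr (q - 1) / (q - 1)
      = (f powr (q - 1) - Y powr (q - 1)) / (1 - q)"
    by (metis divide_minus_right minus_diff_eq diff_divide_distrib)
  finally show ?thesis .
qed

lemma nn_integral_abs_eq_integral:
  assumes "integrable M \<phi>" "\<forall>x\<in>space M. 0 \<le> \<phi> x"
  shows "(\<integral>\<^sup>+x. ennreal \<bar>\<phi> x\<bar> \<partial>M) = ennreal (\<integral>x. \<phi> x \<partial>M)"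
proof -
  have "(\<integral>\<^sup>+x. ennreal \<bar>\<phi> x\<bar> \<partial>M) = (\<integral>\<^sup>+x. ennreal (\<phi> x) \<partial>M)"
    using assms by (intro nn_integral_cong) auto
  also have "\<dots> = ennreal (\<integral>x. \<phi> x \<partial>M)"
    using assms by (intro nn_integral_eq_integral) auto
  finally show ?thesis .
qed

lemma integral_le_of_nn_integral_le:
  fixes f g :: "'a \<Rightarrow> real"
  assumes [measurable]: "f \<in> borel_measurable M" and g: "integrable M g"
    and f_nonneg: "\<And>x. x \<in> space M \<Longrightarrow> 0 \<le> f x" and g_nonneg: "\<And>x. x \<in> space M \<Longrightarrow> 0 \<le> g x"
    and le: "(\<integral>\<^sup>+x. ennreal (f x) \<partial>M) \<le> (\<integral>\<^sup>+x. ennreal (g x) \<partial>M)"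
  shows "integrable M f" and "(\<integral>x. f x \<partial>M) \<le> (\<integral>x. g x \<partial>M)"
proof -
  have nn_g: "(\<integral>\<^sup>+x. ennreal (g x) \<partial>M) = ennreal (\<integral>x. g x \<partial>M)"
    using g_nonneg by (intro nn_integral_eq_integral g) (auto intro: AE_I2)
  show int_f: "integrable M f"
  proof (rule integrableI_bounded)
    have "(\<integral>\<^sup>+x. ennreal (norm (f x)) \<partial>M) = (\<integral>\<^sup>+x. ennreal (f x) \<partial>M)"
      using f_nonneg by (intro nn_integral_cong) auto
    then show "(\<integral>\<^sup>+x. ennreal (norm (f x)) \<partial>M) < \<infinity>" using le nn_g by (simp add: le_less_trans)
  qed simp
  have "ennreal (\<integral>x. f x \<partial>M) \<le> ennreal (\<integral>x. g x \<partial>M)"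
    using le nn_g nn_integral_eq_integral[OF int_f] f_nonneg by (simp add: AE_I2)
  then show "(\<integral>x. f x \<partial>M) \<le> (\<integral>x. g x \<partial>M)"
    using g_nonneg by (subst (asm) ennreal_le_iff) (auto intro: integral_nonneg_AE AE_I2)
qed

lemma ennreal_powr_le_ennpow:
  assumes "ennreal a \<le> m" "0 \<le> a" "0 \<le> q"
  shows "ennreal (a powr q) \<le> ennpow m q"
proof (cases "m = \<top>")
  case False
  then have "a \<le> enn2real m"
    using assms enn2real_mono[OF assms(1)] by (simp add: top.not_eq_extremum)
  then show ?thesis using False assms by (simp add: ennpow_def powr_mono2)
qed (simp add: ennpow_def)

text \<open>\<open>\<phi>\<^sup>q = y\<^sup>q (\<phi>/y)\<^sup>q\<close>, and \<open>(\<phi>/y)\<^sup>q\<close> lies below its tangent line at \<open>x\<^sub>0\<close>.\<close>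
lemma integral_powr_le_tangent:
  fixes q x0 :: real and \<phi> y :: "'a \<Rightarrow> real"
  assumes q: "0 < q" "q < 1" and x0: "0 < x0"
    and nn: "\<forall>x\<in>space M. 0 \<le> \<phi> x" and ypos: "\<forall>x\<in>space M. 0 < y x"
    and int_phq: "integrable M (\<lambda>x. \<phi> x powr q)"
    and int_py: "integrable M (\<lambda>x. \<phi> x * y x powr (q - 1))"
    and int_yq: "integrable M (\<lambda>x. y x powr q)"
  shows "(\<integral>x. \<phi> x powr q \<partial>M)
    \<le> q * x0 powr (q - 1) * (\<integral>x. \<phi> x * y x powr (q - 1) \<partial>M) + (1 - q) * x0 powr q * (\<integral>x. y x powr q \<partial>M)"
proof -
  have "(\<integral>x. \<phi> x powr q \<partial>M)
      \<le> (\<integral>x. q * x0 powr (q - 1) * (\<phi> x * y x powr (q - 1)) + (1 - q) * x0 powr q * y x powr q \<partial>M)"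
  proof (rule integral_mono)
    fix x assume x: "x \<in> space M"
    have yx: "0 < y x" and px: "0 \<le> \<phi> x" using ypos nn x by auto
    have "\<phi> x powr q = y x powr q * (\<phi> x / y x) powr q"
      using yx px by (simp add: powr_divide)
    also have "\<dots> \<le> y x powr q * (q * x0 powr (q - 1) * (\<phi> x / y x) + (1 - q) * x0 powr q)"
      using powr_le_tangent_line[OF q _ x0, of "\<phi> x / y x"] px yx by (intro mult_left_mono) auto
    also have "\<dots> = q * x0 powr (q - 1) * (\<phi> x * y x powr (q - 1)) + (1 - q) * x0 powr q * y x powr q"
      using yx by (simp add: powr_diff algebra_simps)
    finally show "\<phi> x powr q
        \<le> q * x0 powr (q - 1) * (\<phi> x * y x powr (q - 1)) + (1 - q) * x0 powr q * y x powr q" .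
  qed (use int_phq int_py int_yq in simp_all)
  also have "\<dots> = q * x0 powr (q - 1) * (\<integral>x. \<phi> x * y x powr (q - 1) \<partial>M)
      + (1 - q) * x0 powr q * (\<integral>x. y x powr q \<partial>M)"
    using int_py int_yq by simp
  finally show ?thesis .
qed

lemma disjoint_family_on_Un:
  assumes "disjoint_family_on (\<lambda>K. K) A" "disjoint_family_on (\<lambda>K. K) B" "\<Union>A \<inter> \<Union>B = {}"
  shows "disjoint_family_on (\<lambda>K. K) (A \<union> B)"
  using assms unfolding disjoint_family_on_def by blast

lemma (in finite_measure) countable_subfamily_measure_approx:
  assumes cD: "countable D" and DM: "D \<subseteq> sets M"
    and small: "\<And>K. K \<in> D \<Longrightarrow> measure M K \<le> \<epsilon>"
    and d: "0 \<le> d" "d < measure M (\<Union>D)"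
  obtains P where "P \<subseteq> D" "measure M (\<Union>P) \<le> d" "d - measure M (\<Union>P) < \<epsilon>"
proof -
  have Union_sets: "\<Union>P \<in> sets M" if "P \<subseteq> D" for P
    using countable_subset[OF that cD] that DM by (intro sets.countable_Union) auto
  define idx where "idx = to_nat_on D"
  have inj: "inj_on idx D" unfolding idx_def using cD by (rule inj_on_to_nat_on)
  define U where "U = (\<lambda>i. \<Union>{K\<in>D. idx K \<le> i})"
  have U_sets: "U i \<in> sets M" for i unfolding U_def by (rule Union_sets) auto
  have "incseq U" unfolding U_def incseq_def by auto
  then have "(\<lambda>i. measure M (U i)) \<longlonglongrightarrow> measure M (\<Union>i. U i)"
    using U_sets by (intro finite_Lim_measure_incseq) auto
  moreover have "(\<Union>i. U i) = \<Union>D" unfolding U_def by auto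
  ultimately have "eventually (\<lambda>i. d < measure M (U i)) sequentially"
    using d(2) by (simp add: order_tendstoD)
  then obtain i0 where i0: "d < measure M (U i0)" by (auto simp: eventually_sequentially)
  define j where "j = (LEAST i. d < measure M (U i))"
  have jd: "d < measure M (U j)" unfolding j_def by (rule LeastI[of "\<lambda>i. d < measure M (U i)", OF i0])
  define P where "P = {K\<in>D. idx K < j}"
  have PD: "P \<subseteq> D" by (auto simp: P_def)
  have Pd: "measure M (\<Union>P) \<le> d"
  proof (cases j)
    case (Suc j')
    then have "\<Union>P = U j'" by (auto simp: P_def U_def less_Suc_eq_le)
    moreover have "\<not> d < measure M (U j')"
      using not_less_Least[of j' "\<lambda>i. d < measure M (U i)"] Suc by (simp add: j_def)
    ultimately show ?thesis by simp
  qed (use d in \<open>simp add: P_def\<close>)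
  have "d - measure M (\<Union>P) < \<epsilon>"
  proof (cases "\<exists>K0\<in>D. idx K0 = j")
    case True
    then obtain K0 where K0: "K0 \<in> D" "idx K0 = j" by blast
    have "U j \<subseteq> \<Union>P \<union> K0"
      using inj K0 by (auto simp: U_def P_def order.order_iff_strict dest: inj_onD)
    then have "measure M (U j) \<le> measure M (\<Union>P \<union> K0)"
      using Union_sets[OF PD] K0 DM by (intro finite_measure_mono) auto
    also have "\<dots> \<le> measure M (\<Union>P) + measure M K0"
      using Union_sets[OF PD] K0 DM by (intro measure_Un_le) auto
    finally show ?thesis using jd small[OF K0(1)] by simp
  next
    case False
    then have "U j = \<Union>P" by (auto simp: U_def P_def order.order_iff_strict)
    then show ?thesis using jd Pd by simp
  qed
  then show ?thesis using that PD Pd by blast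
qed

lemma suminf_ennreal_geometric:
  fixes C \<rho> :: real
  assumes "0 \<le> C" "0 \<le> \<rho>" "\<rho> < 1"
  shows "(\<Sum>k. ennreal (C * \<rho> ^ k)) = ennreal (C / (1 - \<rho>))"
proof -
  have s: "(\<lambda>k. C * \<rho> ^ k) sums (C * (1 / (1 - \<rho>)))"
    using geometric_sums[of \<rho>] assms by (intro sums_mult) auto
  have "(\<Sum>k. ennreal (C * \<rho> ^ k)) = ennreal (\<Sum>k. C * \<rho> ^ k)"
    using assms s by (intro suminf_ennreal2) (auto simp: sums_iff)
  also have "\<dots> = ennreal (C / (1 - \<rho>))" using s by (simp add: sums_iff)
  finally show ?thesis .
qed

lemma powr_mult_power:
  fixes C r q :: real
  assumes "0 \<le> C" "0 < r"
  shows "(C * r ^ k) powr q = C powr q * (r powr q) ^ k"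
proof -
  have "(r ^ k) powr q = (r powr q) ^ k"
    using assms by (simp add: powr_power powr_powr mult.commute flip: powr_realpow)
  then show ?thesis by (simp add: powr_mult)
qed

lemma suminf_ennreal_shifted_geometric:
  fixes c r b m :: real
  assumes c: "0 \<le> c" and r: "0 \<le> r" and b: "0 < b" "b < 1" and rb: "r * b < 1" and m: "0 \<le> m"
  shows "(\<Sum>j. ennreal (c * r ^ j * (if j < k then 0 else b ^ (j - k) * (1 - b) * m)))
     = ennreal (c * r ^ k * (1 - b) * m / (1 - r * b))"
proof -
  define f where "f = (\<lambda>j. c * r ^ j * (if j < k then 0 else b ^ (j - k) * (1 - b) * m))"
  define C where "C = c * r ^ k * (1 - b) * m"
  have sh: "(\<lambda>i. f (i + k)) = (\<lambda>i. C * (r * b) ^ i)"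
    by (auto simp: f_def C_def power_add power_mult_distrib algebra_simps)
  have "(\<lambda>i. C * (r * b) ^ i) sums (C * (1 / (1 - r * b)))"
    using geometric_sums[of "r * b"] rb r b by (intro sums_mult) auto
  then have "(\<lambda>i. f (i + k)) sums (C / (1 - r * b))" using sh by simp
  then have fs: "f sums (C / (1 - r * b) + (\<Sum>i<k. f i))" by (simp add: sums_iff_shift)
  have "(\<Sum>i<k. f i) = 0" by (auto simp: f_def intro!: sum.neutral)
  with fs have fs2: "f sums (C / (1 - r * b))" by simp
  have "(\<Sum>j. ennreal (f j)) = ennreal (suminf f)"
    using fs2 c r b m by (intro suminf_ennreal2) (auto simp: f_def sums_iff)
  also have "\<dots> = ennreal (C / (1 - r * b))" using fs2 by (simp add: sums_iff)
  finally show ?thesis by (simp add: f_def C_def)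
qed

section \<open>Dyadic trees and the maximal operator\<close>

locale dyadic_tree = prob_space M for M :: "'a measure" +
  fixes T :: "'a set set" and C :: "'a set \<Rightarrow> 'a set set"
  assumes tree: "tree_with M T C"
begin

abbreviation level :: "nat \<Rightarrow> 'a set set" where
  "level m \<equiv> tree_level (space M) C m"

definition mesh :: "nat \<Rightarrow> real" where
  "mesh m = (SUP I\<in>level m. measure M I)"

lemma space_in_tree: "space M \<in> T"
  using tree unfolding tree_with_def by blast

lemma tree_sets: "I \<in> T \<Longrightarrow> I \<in> sets M"
  using tree by (simp add: tree_with_def)

lemma tree_measure_pos: "I \<in> T \<Longrightarrow> 0 < measure M I"
  using tree by (simp add: tree_with_def)

lemma tree_subset_space: "I \<in> T \<Longrightarrow> I \<subseteq> space M"
  using tree_sets sets.sets_into_space by blast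

lemma tree_children:
  assumes "I \<in> T"
  shows "C I \<subseteq> T" "countable (C I)" "pairwise disjnt (C I)" "\<And>J. J \<in> C I \<Longrightarrow> J \<subseteq> I"
    "\<Union>(C I) = I"
  using tree assms by (auto simp: tree_with_def)

lemma tree_eq_levels: "T = (\<Union>m. level m)"
  using tree by (simp add: tree_with_def)

lemma level_subset_tree: "level m \<subseteq> T"
  using tree_eq_levels by blast

lemma tree_in_level: "I \<in> T \<Longrightarrow> \<exists>m. I \<in> level m"
  using tree_eq_levels by auto

lemma Union_level: "\<Union>(level m) = space M"
proof (induction m)
  case (Suc m)
  have "\<Union>(level (Suc m)) = (\<Union>I\<in>level m. \<Union>(C I))" by auto
  also have "\<dots> = (\<Union>I\<in>level m. I)" using tree_children(5) level_subset_tree by (intro SUP_cong) auto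
  finally show ?case using Suc by simp
qed simp

lemma level_disjoint: "I \<in> level m \<Longrightarrow> J \<in> level m \<Longrightarrow> I \<noteq> J \<Longrightarrow> I \<inter> J = {}"
proof (induction m arbitrary: I J)
  case (Suc m)
  from Suc.prems obtain I' J' where I': "I' \<in> level m" "I \<in> C I'" and J': "J' \<in> level m" "J \<in> C J'"
    by auto
  show ?case
  proof (cases "I' = J'")
    case True
    then show ?thesis using tree_children(3)[of I'] I' J' Suc.prems level_subset_tree
      by (auto simp: pairwise_def disjnt_def)
  next
    case False
    then have "I' \<inter> J' = {}" using Suc.IH I' J' by blast
    moreover have "I \<subseteq> I'" "J \<subseteq> J'" using tree_children(4) I' J' level_subset_tree by blast+
    ultimately show ?thesis by blast
  qed
qed simp

lemma countable_level: "countable (level m)"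
  by (induction m) (use tree_children(2) level_subset_tree in auto)

lemma countable_tree: "countable T"
  using countable_level tree_eq_levels by auto

lemma level_ancestor: "K \<in> level n \<Longrightarrow> m \<le> n \<Longrightarrow> \<exists>J\<in>level m. K \<subseteq> J"
proof (induction n arbitrary: K)
  case (Suc n)
  show ?case
  proof (cases "m = Suc n")
    case False
    then have "m \<le> n" using Suc.prems by simp
    from Suc.prems obtain K' where K': "K' \<in> level n" "K \<in> C K'" by auto
    then have "K \<subseteq> K'" using tree_children(4) level_subset_tree by blast
    with Suc.IH[OF K'(1) \<open>m \<le> n\<close>] show ?thesis by blast
  qed (use Suc.prems in auto)
qed auto

lemma levels_nested:
  assumes "A \<in> level a" "B \<in> level b" "a \<le> b"
  shows "B \<subseteq> A \<or> A \<inter> B = {}"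
proof -
  obtain J where J: "J \<in> level a" "B \<subseteq> J" using level_ancestor assms(2,3) by blast
  then show ?thesis using level_disjoint[OF assms(1) J(1)] by blast
qed

lemma level_cover: "x \<in> space M \<Longrightarrow> \<exists>K\<in>level m. x \<in> K"
  using Union_level[of m] by blast

lemma measure_le_mesh: "K \<in> level m \<Longrightarrow> measure M K \<le> mesh m"
  unfolding mesh_def by (rule cSUP_upper) (auto intro: bdd_aboveI[of _ 1])

lemma mesh_tendsto_0: "mesh \<longlonglongrightarrow> 0"
  using tree unfolding tree_with_def mesh_def by auto

lemma Union_tree_family_sets: "countable G \<Longrightarrow> G \<subseteq> T \<Longrightarrow> \<Union>G \<in> sets M"
  using tree_sets by (intro sets.countable_Union) auto

definition cell_mean :: "('a \<Rightarrow> real) \<Rightarrow> 'a set \<Rightarrow> ennreal" where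
  "cell_mean \<phi> I = ennreal (1 / measure M I) * (\<integral>\<^sup>+ y\<in>I. ennreal \<bar>\<phi> y\<bar> \<partial>M)"

lemma dyadic_max_eq_SUP_cell_mean:
  "dyadic_max M T \<phi> x = (SUP I\<in>{I\<in>T. x \<in> I}. cell_mean \<phi> I)"
  by (simp add: dyadic_max_def cell_mean_def)

lemma cell_mean_le_dyadic_max: "I \<in> T \<Longrightarrow> x \<in> I \<Longrightarrow> cell_mean \<phi> I \<le> dyadic_max M T \<phi> x"
  unfolding dyadic_max_eq_SUP_cell_mean by (auto intro: SUP_upper2)

lemma measure_mult_cell_mean:
  assumes "I \<in> T"
  shows "ennreal (measure M I) * cell_mean \<phi> I = (\<integral>\<^sup>+ y\<in>I. ennreal \<bar>\<phi> y\<bar> \<partial>M)"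
proof -
  have "ennreal (measure M I) * ennreal (1 / measure M I) = 1"
    using tree_measure_pos[OF assms] by (simp flip: ennreal_mult)
  then show ?thesis unfolding cell_mean_def by (simp flip: mult.assoc)
qed

lemma dyadic_max_measurable [measurable]:
  assumes [measurable]: "\<phi> \<in> borel_measurable M"
  shows "dyadic_max M T \<phi> \<in> borel_measurable M"
proof -
  have "dyadic_max M T \<phi> x = (SUP I\<in>T. cell_mean \<phi> I * indicator I x)" if "x \<in> space M" for x
    unfolding dyadic_max_eq_SUP_cell_mean
    by (intro antisym SUP_mono SUP_least) (auto simp: indicator_def intro: SUP_upper2)
  moreover have "(\<lambda>x. SUP I\<in>T. cell_mean \<phi> I * indicator I x) \<in> borel_measurable M"
    using countable_tree tree_sets by (intro borel_measurable_SUP) auto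
  ultimately show ?thesis by (subst measurable_cong) auto
qed

lemma dyadic_max_superlevel_eq:
  "{x\<in>space M. c < dyadic_max M T \<phi> x} = \<Union>{I\<in>T. c < cell_mean \<phi> I}"
  using tree_subset_space cell_mean_le_dyadic_max
  by (fastforce simp: dyadic_max_eq_SUP_cell_mean less_SUP_iff intro: less_le_trans)

definition maximal_cells :: "'a set set \<Rightarrow> 'a set set" where
  "maximal_cells S = {I. \<exists>m. I \<in> level m \<and> I \<in> S \<and> (\<forall>j<m. \<forall>J\<in>level j. I \<subseteq> J \<longrightarrow> J \<notin> S)}"

lemma maximal_cells_subset: "maximal_cells S \<subseteq> S"
  by (auto simp: maximal_cells_def)

lemma Union_maximal_cells:
  assumes "S \<subseteq> T"
  shows "\<Union>(maximal_cells S) = \<Union>S"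
proof
  show "\<Union>S \<subseteq> \<Union>(maximal_cells S)"
  proof
    fix x assume "x \<in> \<Union>S"
    then obtain I n where I: "I \<in> S" "x \<in> I" "I \<in> level n"
      using assms tree_in_level by blast
    define P where "P = (\<lambda>m. \<exists>K\<in>level m. x \<in> K \<and> K \<in> S)"
    define m where "m = (LEAST m. P m)"
    have "P m" unfolding m_def by (rule LeastI[of P n]) (use I in \<open>auto simp: P_def\<close>)
    then obtain K where K: "K \<in> level m" "x \<in> K" "K \<in> S" by (auto simp: P_def)
    have "\<forall>j<m. \<forall>J\<in>level j. K \<subseteq> J \<longrightarrow> J \<notin> S"
      using not_less_Least K(2) unfolding m_def P_def by blast
    then have "K \<in> maximal_cells S" using K by (auto simp: maximal_cells_def)
    then show "x \<in> \<Union>(maximal_cells S)" using K by blast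
  qed
qed (use maximal_cells_subset in blast)

lemma maximal_cells_disjoint: "disjoint_family_on (\<lambda>K. K) (maximal_cells S)"
proof (unfold disjoint_family_on_def, intro ballI impI)
  fix K1 K2 assume K1: "K1 \<in> maximal_cells S" and K2: "K2 \<in> maximal_cells S" and ne: "K1 \<noteq> K2"
  obtain m1 where m1: "K1 \<in> level m1" "K1 \<in> S" "\<forall>j<m1. \<forall>J\<in>level j. K1 \<subseteq> J \<longrightarrow> J \<notin> S"
    using K1 by (auto simp: maximal_cells_def)
  obtain m2 where m2: "K2 \<in> level m2" "K2 \<in> S" "\<forall>j<m2. \<forall>J\<in>level j. K2 \<subseteq> J \<longrightarrow> J \<notin> S"
    using K2 by (auto simp: maximal_cells_def)
  consider "m1 = m2" | "m1 < m2" | "m2 < m1" by linarith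
  then show "K1 \<inter> K2 = {}"
  proof cases
    case 1 then show ?thesis using level_disjoint m1 m2 ne by blast
  next
    case 2 then show ?thesis using levels_nested[OF m1(1) m2(1)] m2(3) m1 by auto
  next
    case 3 then show ?thesis using levels_nested[OF m2(1) m1(1)] m1(3) m2 by auto
  qed
qed

lemma dyadic_max_weak_type:
  assumes [measurable]: "\<phi> \<in> borel_measurable M" and "0 \<le> c"
  defines "E \<equiv> {x\<in>space M. ennreal c < dyadic_max M T \<phi> x}"
  shows "ennreal c * emeasure M E \<le> (\<integral>\<^sup>+ x. ennreal \<bar>\<phi> x\<bar> * indicator E x \<partial>M)"
proof -
  define G where "G = maximal_cells {I\<in>T. ennreal c < cell_mean \<phi> I}"
  have GT: "G \<subseteq> T" and G_mean: "\<And>K. K \<in> G \<Longrightarrow> ennreal c < cell_mean \<phi> K"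
    using maximal_cells_subset unfolding G_def by blast+
  have E_eq: "E = \<Union>G"
    unfolding E_def G_def dyadic_max_superlevel_eq by (rule Union_maximal_cells[symmetric]) auto
  have disj: "disjoint_family_on (\<lambda>K. K) G"
    unfolding G_def by (rule maximal_cells_disjoint)
  have cG: "countable G" using countable_subset[OF GT countable_tree] .
  have Gsets: "K \<in> sets M" if "K \<in> G" for K using GT tree_sets that by blast
  define N where "N = density M (\<lambda>x. ennreal \<bar>\<phi> x\<bar>)"
  have NK: "emeasure N K = (\<integral>\<^sup>+ y\<in>K. ennreal \<bar>\<phi> y\<bar> \<partial>M)" if "K \<in> sets M" for K
    unfolding N_def using that by (subst emeasure_density) auto
  have each: "ennreal c * emeasure M K \<le> emeasure N K" if K: "K \<in> G" for K
  proof -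
    have "ennreal c * emeasure M K = ennreal (measure M K) * ennreal c"
      by (simp add: emeasure_eq_measure mult.commute)
    also have "\<dots> \<le> ennreal (measure M K) * cell_mean \<phi> K"
      using G_mean[OF K] by (intro mult_left_mono) auto
    also have "\<dots> = emeasure N K"
      using measure_mult_cell_mean NK GT K Gsets by auto
    finally show ?thesis .
  qed
  have "ennreal c * emeasure M E = ennreal c * (\<integral>\<^sup>+K. emeasure M K \<partial>count_space G)"
    unfolding E_eq using emeasure_UN_countable[of G "\<lambda>K. K" M] cG disj Gsets by simp
  also have "\<dots> = (\<integral>\<^sup>+K. ennreal c * emeasure M K \<partial>count_space G)"
    by (simp add: nn_integral_cmult)
  also have "\<dots> \<le> (\<integral>\<^sup>+K. emeasure N K \<partial>count_space G)"
    by (intro nn_integral_mono) (use each in auto)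
  also have "\<dots> = emeasure N (\<Union>G)"
    using emeasure_UN_countable[of G "\<lambda>K. K" N] cG disj Gsets by (simp add: N_def)
  also have "\<dots> = (\<integral>\<^sup>+ x. ennreal \<bar>\<phi> x\<bar> * indicator E x \<partial>M)"
    using NK[of "\<Union>G"] E_eq Union_tree_family_sets[OF cG GT] by simp
  finally show ?thesis .
qed

section \<open>The upper bound\<close>

lemma integral_le_dyadic_max:
  assumes "integrable M \<phi>" "\<forall>x\<in>space M. 0 \<le> \<phi> x" "x \<in> space M"
  shows "ennreal (\<integral>x. \<phi> x \<partial>M) \<le> dyadic_max M T \<phi> x"
proof -
  have "cell_mean \<phi> (space M) = ennreal (\<integral>x. \<phi> x \<partial>M)"
    using nn_integral_abs_eq_integral[OF assms(1,2)]
    by (simp add: cell_mean_def prob_space nn_integral_cong[of _ "\<lambda>y. _ * indicator (space M) y"])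
  then show ?thesis using cell_mean_le_dyadic_max[OF space_in_tree assms(3), of \<phi>] by simp
qed

lemma dyadic_max_finite_AE:
  assumes int: "integrable M \<phi>" and nn: "\<forall>x\<in>space M. 0 \<le> \<phi> x"
  shows "AE x in M. dyadic_max M T \<phi> x \<noteq> \<top>"
proof -
  have [measurable]: "\<phi> \<in> borel_measurable M" using int by auto
  define N where "N = {x\<in>space M. dyadic_max M T \<phi> x = \<top>}"
  have N_sets: "N \<in> sets M" unfolding N_def by measurable
  have I0: "0 \<le> (\<integral>x. \<phi> x \<partial>M)" using nn by (intro integral_nonneg_AE AE_I2) auto
  have bound: "c * measure M N \<le> (\<integral>x. \<phi> x \<partial>M)" if c: "0 < c" for c
  proof -
    define E where "E = {x\<in>space M. ennreal c < dyadic_max M T \<phi> x}"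
    have "E \<in> sets M" unfolding E_def by measurable
    moreover have "N \<subseteq> E" by (auto simp: N_def E_def)
    ultimately have "ennreal c * emeasure M N \<le> ennreal c * emeasure M E"
      by (intro mult_left_mono emeasure_mono) auto
    also have "\<dots> \<le> (\<integral>\<^sup>+ x. ennreal \<bar>\<phi> x\<bar> * indicator E x \<partial>M)"
      unfolding E_def using dyadic_max_weak_type[of \<phi> c] c by simp
    also have "\<dots> \<le> (\<integral>\<^sup>+ x. ennreal \<bar>\<phi> x\<bar> \<partial>M)"
      by (intro nn_integral_mono) (auto simp: indicator_def)
    also have "\<dots> = ennreal (\<integral>x. \<phi> x \<partial>M)" by (rule nn_integral_abs_eq_integral[OF int nn])
    finally have "ennreal (c * measure M N) \<le> ennreal (\<integral>x. \<phi> x \<partial>M)"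
      using c by (simp add: emeasure_eq_measure ennreal_mult)
    then show ?thesis using I0 by (simp add: ennreal_le_iff)
  qed
  have "measure M N = 0"
  proof (rule ccontr)
    assume "measure M N \<noteq> 0"
    then have "0 < measure M N" by (simp add: order_le_neq_trans)
    then show False
      using bound[of "((\<integral>x. \<phi> x \<partial>M) + 1) / measure M N"] I0 by simp
  qed
  then show ?thesis
    using AE_iff_measurable[OF N_sets, of "\<lambda>x. dyadic_max M T \<phi> x \<noteq> \<top>"]
    by (simp add: N_def emeasure_eq_measure)
qed

lemma dyadic_max_real_representative:
  assumes int: "integrable M \<phi>" and nn: "\<forall>x\<in>space M. 0 \<le> \<phi> x" and If: "(\<integral>x. \<phi> x \<partial>M) = f"
  obtains y where "y \<in> borel_measurable M" "\<And>x. x \<in> space M \<Longrightarrow> f \<le> y x"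
    "AE x in M. dyadic_max M T \<phi> x = ennreal (y x)"
proof
  have [measurable]: "\<phi> \<in> borel_measurable M" using int by auto
  define y where "y = (\<lambda>x. if dyadic_max M T \<phi> x = \<top> then f else enn2real (dyadic_max M T \<phi> x))"
  show "y \<in> borel_measurable M" unfolding y_def by measurable
  show "f \<le> y x" if x: "x \<in> space M" for x
  proof (cases "dyadic_max M T \<phi> x = \<top>")
    case False
    have "ennreal f \<le> dyadic_max M T \<phi> x" using integral_le_dyadic_max[OF int nn x] If by simp
    also have "\<dots> = ennreal (enn2real (dyadic_max M T \<phi> x))"
      using False by (simp add: ennreal_enn2real_if)
    finally show ?thesis using False by (simp add: y_def ennreal_le_iff)
  qed (simp add: y_def)
  show "AE x in M. dyadic_max M T \<phi> x = ennreal (y x)"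
    using dyadic_max_finite_AE[OF int nn] by eventually_elim (simp add: y_def ennreal_enn2real_if)
qed

lemma representative_weak_type:
  assumes phim[measurable]: "\<phi> \<in> borel_measurable M" and [measurable]: "y \<in> borel_measurable M"
    and nn: "\<forall>x\<in>space M. 0 \<le> \<phi> x" and yAE: "AE x in M. dyadic_max M T \<phi> x = ennreal (y x)"
    and l: "0 < l"
  shows "ennreal l * emeasure M {x\<in>space M. l < y x}
    \<le> (\<integral>\<^sup>+ x. ennreal (\<phi> x) * indicator {x\<in>space M. l < y x} x \<partial>M)"
proof -
  define E where "E = {x\<in>space M. ennreal l < dyadic_max M T \<phi> x}"
  define E' where "E' = {x\<in>space M. l < y x}"
  have E_sets: "E \<in> sets M" unfolding E_def by measurable
  have E'_sets: "E' \<in> sets M" unfolding E'_def by measurable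
  have AE_eq: "AE x in M. (x \<in> E') = (x \<in> E)"
    using yAE by eventually_elim (use l in \<open>auto simp: E_def E'_def ennreal_less_iff\<close>)
  have "ennreal l * emeasure M E' = ennreal l * emeasure M E"
    using emeasure_eq_AE[OF AE_eq E'_sets E_sets] by simp
  also have "\<dots> \<le> (\<integral>\<^sup>+ x. ennreal \<bar>\<phi> x\<bar> * indicator E x \<partial>M)"
    unfolding E_def using dyadic_max_weak_type[OF phim, of l] l by simp
  also have "\<dots> = (\<integral>\<^sup>+ x. ennreal (\<phi> x) * indicator E' x \<partial>M)"
  proof (rule nn_integral_cong_AE)
    show "AE x in M. ennreal \<bar>\<phi> x\<bar> * indicator E x = ennreal (\<phi> x) * indicator E' x"
      using AE_eq AE_space by eventually_elim (simp add: indicator_def nn)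
  qed
  finally show ?thesis by (simp add: E'_def)
qed

lemma weighted_weak_type:
  fixes q :: real
  assumes phim[measurable]: "\<phi> \<in> borel_measurable M" and ym[measurable]: "y \<in> borel_measurable M"
    and nn: "\<forall>x\<in>space M. 0 \<le> \<phi> x" and yAE: "AE x in M. dyadic_max M T \<phi> x = ennreal (y x)"
    and l: "0 < l"
  defines "E \<equiv> {x\<in>space M. l < y x}"
  shows "(\<integral>\<^sup>+x. ennreal (l powr (q - 1)) * indicator E x \<partial>M)
    \<le> (\<integral>\<^sup>+x. ennreal (\<phi> x * l powr (q - 2)) * indicator E x \<partial>M)"
proof -
  have E_sets[measurable]: "E \<in> sets M" unfolding E_def by measurable
  have "l powr (q - 2) * l = l powr (q - 2) * l powr 1" using l by simp
  also have "\<dots> = l powr (q - 2 + 1)" by (rule powr_add[symmetric])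
  finally have l_powr: "ennreal (l powr (q - 1)) = ennreal (l powr (q - 2)) * ennreal l"
    using l by (simp flip: ennreal_mult)
  have "(\<integral>\<^sup>+x. ennreal (l powr (q - 1)) * indicator E x \<partial>M) = ennreal (l powr (q - 1)) * emeasure M E"
    by (rule nn_integral_cmult_indicator[OF E_sets])
  also have "\<dots> = ennreal (l powr (q - 2)) * (ennreal l * emeasure M E)"
    unfolding l_powr by (simp add: mult.assoc)
  also have "\<dots> \<le> ennreal (l powr (q - 2)) * (\<integral>\<^sup>+ x. ennreal (\<phi> x) * indicator E x \<partial>M)"
    using representative_weak_type[OF phim ym nn yAE l] unfolding E_def by (rule mult_left_mono) simp
  also have "\<dots> = (\<integral>\<^sup>+ x. ennreal (l powr (q - 2)) * (ennreal (\<phi> x) * indicator E x) \<partial>M)"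
    by (rule nn_integral_cmult[symmetric]) measurable
  also have "\<dots> = (\<integral>\<^sup>+x. ennreal (\<phi> x * l powr (q - 2)) * indicator E x \<partial>M)"
  proof (rule nn_integral_cong)
    fix x assume "x \<in> space M"
    then have "ennreal (l powr (q - 2)) * ennreal (\<phi> x) = ennreal (\<phi> x * l powr (q - 2))"
      using nn by (simp add: ennreal_mult' mult.commute)
    then show "ennreal (l powr (q - 2)) * (ennreal (\<phi> x) * indicator E x)
        = ennreal (\<phi> x * l powr (q - 2)) * indicator E x"
      by (metis mult.assoc)
  qed
  finally show ?thesis .
qed

text \<open>Integrate \<open>l\<^sup>q\<^sup>-\<^sup>1 \<mu>{\<M>\<phi> > l} \<le> l\<^sup>q\<^sup>-\<^sup>2 \<integral>\<^sub>{\<^sub>\<M>\<^sub>\<phi>\<^sub>>\<^sub>l\<^sub>} \<phi>\<close> over \<open>l > f\<close> and apply Tonelli on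
  both sides.\<close>
lemma layer_cake_inequality:
  fixes q f :: real and \<phi> y :: "'a \<Rightarrow> real"
  assumes q: "0 < q" "q < 1" and f: "0 < f"
    and phim[measurable]: "\<phi> \<in> borel_measurable M" and nn: "\<forall>x\<in>space M. 0 \<le> \<phi> x"
    and ym[measurable]: "y \<in> borel_measurable M" and yge: "\<And>x. x \<in> space M \<Longrightarrow> f \<le> y x"
    and yAE: "AE x in M. dyadic_max M T \<phi> x = ennreal (y x)"
  shows "(\<integral>\<^sup>+x. ennreal ((y x powr q - f powr q) / q) \<partial>M)
      \<le> (\<integral>\<^sup>+x. ennreal (\<phi> x * ((f powr (q - 1) - y x powr (q - 1)) / (1 - q))) \<partial>M)"
proof -
  interpret P: pair_sigma_finite M "lborel :: real measure" by unfold_locales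
  define k1 where "k1 = (\<lambda>x l::real. ennreal (if f < l \<and> l < y x then l powr (q - 1) else 0))"
  define k2 where "k2 = (\<lambda>x l::real. ennreal (if f < l \<and> l < y x then \<phi> x * l powr (q - 2) else 0))"
  have k1m: "case_prod k1 \<in> borel_measurable (M \<Otimes>\<^sub>M lborel)" unfolding k1_def by measurable
  have k2m: "case_prod k2 \<in> borel_measurable (M \<Otimes>\<^sub>M lborel)" unfolding k2_def by measurable
  have "(\<integral>\<^sup>+x. ennreal ((y x powr q - f powr q) / q) \<partial>M) = (\<integral>\<^sup>+x. \<integral>\<^sup>+l. k1 x l \<partial>lborel \<partial>M)"
    by (intro nn_integral_cong) (simp add: k1_def nn_integral_powr_q_minus_1[OF q f yge])
  also have "\<dots> = (\<integral>\<^sup>+l. \<integral>\<^sup>+x. k1 x l \<partial>M \<partial>lborel)"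
    using P.Fubini'[OF k1m] by simp
  also have "\<dots> \<le> (\<integral>\<^sup>+l. \<integral>\<^sup>+x. k2 x l \<partial>M \<partial>lborel)"
  proof (rule nn_integral_mono)
    fix l :: real assume "l \<in> space lborel"
    show "(\<integral>\<^sup>+x. k1 x l \<partial>M) \<le> (\<integral>\<^sup>+x. k2 x l \<partial>M)"
    proof (cases "f < l")
      case True
      let ?E = "{x\<in>space M. l < y x}"
      have "(\<integral>\<^sup>+x. k1 x l \<partial>M) = (\<integral>\<^sup>+x. ennreal (l powr (q - 1)) * indicator ?E x \<partial>M)"
        using True by (intro nn_integral_cong) (auto simp: k1_def indicator_def)
      also have "\<dots> \<le> (\<integral>\<^sup>+x. ennreal (\<phi> x * l powr (q - 2)) * indicator ?E x \<partial>M)"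
        using True f by (intro weighted_weak_type phim ym nn yAE) simp
      also have "\<dots> = (\<integral>\<^sup>+x. k2 x l \<partial>M)"
        using True by (intro nn_integral_cong) (auto simp: k2_def indicator_def)
      finally show ?thesis .
    qed (simp add: k1_def k2_def)
  qed
  also have "\<dots> = (\<integral>\<^sup>+x. \<integral>\<^sup>+l. k2 x l \<partial>lborel \<partial>M)"
    using P.Fubini'[OF k2m] by simp
  also have "\<dots> = (\<integral>\<^sup>+x. ennreal (\<phi> x * ((f powr (q - 1) - y x powr (q - 1)) / (1 - q))) \<partial>M)"
  proof (intro nn_integral_cong)
    fix x assume x: "x \<in> space M"
    have "(\<integral>\<^sup>+l. k2 x l \<partial>lborel)
        = (\<integral>\<^sup>+l. ennreal (\<phi> x) * ennreal (if f < l \<and> l < y x then l powr (q - 2) else 0) \<partial>lborel)"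
      using nn x by (intro nn_integral_cong) (auto simp: k2_def ennreal_mult)
    also have "\<dots> = ennreal (\<phi> x) * ennreal ((f powr (q - 1) - y x powr (q - 1)) / (1 - q))"
      by (simp add: nn_integral_cmult nn_integral_powr_q_minus_2[OF q f yge[OF x]])
    also have "\<dots> = ennreal (\<phi> x * ((f powr (q - 1) - y x powr (q - 1)) / (1 - q)))"
      using nn x by (subst ennreal_mult'[symmetric]) auto
    finally show "(\<integral>\<^sup>+l. k2 x l \<partial>lborel) = ennreal (\<phi> x * ((f powr (q - 1) - y x powr (q - 1)) / (1 - q)))" .
  qed
  finally show ?thesis .
qed

text \<open>With \<open>y\<close> representing \<open>\<M>\<^sub>\<T>\<phi>\<close>, the last conclusion reads
  \<open>(1 - q) \<integral> (\<M>\<phi>)\<^sup>q + q \<integral> \<phi> (\<M>\<phi>)\<^sup>q\<^sup>-\<^sup>1 \<le> f\<^sup>q\<close>.\<close>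
lemma mass_inequality:
  fixes q f :: real and \<phi> y :: "'a \<Rightarrow> real"
  assumes q: "0 < q" "q < 1" and f: "0 < f"
    and int: "integrable M \<phi>" and nn: "\<forall>x\<in>space M. 0 \<le> \<phi> x" and If: "(\<integral>x. \<phi> x \<partial>M) = f"
    and ym[measurable]: "y \<in> borel_measurable M" and yge: "\<And>x. x \<in> space M \<Longrightarrow> f \<le> y x"
    and yAE: "AE x in M. dyadic_max M T \<phi> x = ennreal (y x)"
  shows "integrable M (\<lambda>x. \<phi> x * y x powr (q - 1))" and "integrable M (\<lambda>x. y x powr q)"
    and "(1 - q) * (\<integral>x. y x powr q \<partial>M) + q * (\<integral>x. \<phi> x * y x powr (q - 1) \<partial>M) \<le> f powr q"
proof -
  have phim[measurable]: "\<phi> \<in> borel_measurable M" using int by auto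
  define A where "A = (\<lambda>x. (y x powr q - f powr q) / q)"
  define B where "B = (\<lambda>x. \<phi> x * ((f powr (q - 1) - y x powr (q - 1)) / (1 - q)))"
  have A_nonneg: "0 \<le> A x" if "x \<in> space M" for x
    using yge[OF that] f q by (simp add: A_def powr_mono2)
  have y_powr_le: "y x powr (q - 1) \<le> f powr (q - 1)" if "x \<in> space M" for x
    using yge[OF that] f q by (intro powr_mono2') auto
  have B_nonneg: "0 \<le> B x" if "x \<in> space M" for x
    using y_powr_le[OF that] nn that q by (simp add: B_def)
  show int_py: "integrable M (\<lambda>x. \<phi> x * y x powr (q - 1))"
  proof (rule Bochner_Integration.integrable_bound)
    show "integrable M (\<lambda>x. f powr (q - 1) * \<phi> x)" using int by simp
    show "AE x in M. norm (\<phi> x * y x powr (q - 1)) \<le> norm (f powr (q - 1) * \<phi> x)"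
      using AE_space by eventually_elim
        (use nn y_powr_le in \<open>simp add: abs_mult mult.commute mult_left_mono\<close>)
  qed measurable
  have intB: "integrable M B"
    unfolding B_def using int int_py by (simp add: right_diff_distrib diff_divide_distrib)
  have "(\<integral>x. B x \<partial>M) = (\<integral>x. (f powr (q - 1) * \<phi> x - \<phi> x * y x powr (q - 1)) / (1 - q) \<partial>M)"
    by (simp add: B_def algebra_simps)
  also have "\<dots> = (f powr q - (\<integral>x. \<phi> x * y x powr (q - 1) \<partial>M)) / (1 - q)"
    using int int_py If f by (simp add: powr_diff)
  finally have intB_eq: "(\<integral>x. B x \<partial>M) = (f powr q - (\<integral>x. \<phi> x * y x powr (q - 1) \<partial>M)) / (1 - q)" .
  have le: "(\<integral>\<^sup>+x. ennreal (A x) \<partial>M) \<le> (\<integral>\<^sup>+x. ennreal (B x) \<partial>M)"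
    unfolding A_def B_def by (rule layer_cake_inequality[OF q f phim nn ym yge yAE])
  have Am: "A \<in> borel_measurable M" unfolding A_def by measurable
  have intA: "integrable M A"
    using Am intB A_nonneg B_nonneg le by (rule integral_le_of_nn_integral_le(1))
  have AB: "(\<integral>x. A x \<partial>M) \<le> (\<integral>x. B x \<partial>M)"
    using Am intB A_nonneg B_nonneg le by (rule integral_le_of_nn_integral_le(2))
  have yq_eq: "(\<lambda>x. y x powr q) = (\<lambda>x. q * A x + f powr q)" using q by (auto simp: A_def)
  show "integrable M (\<lambda>x. y x powr q)" unfolding yq_eq using intA by simp
  have L_eq: "(\<integral>x. y x powr q \<partial>M) = q * (\<integral>x. A x \<partial>M) + f powr q"
    unfolding yq_eq using intA by (simp add: prob_space)
  have "(\<integral>x. A x \<partial>M) \<le> (f powr q - (\<integral>x. \<phi> x * y x powr (q - 1) \<partial>M)) / (1 - q)"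
    using AB intB_eq by simp
  then have "(1 - q) * (\<integral>x. A x \<partial>M) \<le> f powr q - (\<integral>x. \<phi> x * y x powr (q - 1) \<partial>M)"
    using q by (simp add: field_simps)
  then have "q * ((1 - q) * (\<integral>x. A x \<partial>M)) \<le> q * (f powr q - (\<integral>x. \<phi> x * y x powr (q - 1) \<partial>M))"
    using q by (intro mult_left_mono) auto
  then show "(1 - q) * (\<integral>x. y x powr q \<partial>M) + q * (\<integral>x. \<phi> x * y x powr (q - 1) \<partial>M) \<le> f powr q"
    unfolding L_eq by (simp add: algebra_simps)
qed

lemma Bellman_integrand_le:
  fixes q f h :: real and \<phi> :: "'a \<Rightarrow> real"
  assumes q: "0 < q" "q < 1" and f: "0 < f" and h: "0 < h" "h \<le> f powr q"
    and int: "integrable M \<phi>" and nn: "\<forall>x\<in>space M. 0 \<le> \<phi> x"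
    and If: "(\<integral>x. \<phi> x \<partial>M) = f" and Ih: "(\<integral>x. \<phi> x powr q \<partial>M) = h"
  shows "(\<integral>\<^sup>+x. ennpow (dyadic_max M T \<phi> x) q \<partial>M) \<le> ennreal (h * omega_q q (f powr q / h))"
proof -
  obtain y where ym[measurable]: "y \<in> borel_measurable M" and yge: "\<And>x. x \<in> space M \<Longrightarrow> f \<le> y x"
    and yAE: "AE x in M. dyadic_max M T \<phi> x = ennreal (y x)"
    using dyadic_max_real_representative[OF int nn If] by blast
  have ypos: "\<forall>x\<in>space M. 0 < y x" using yge f by (auto intro: less_le_trans)
  then have y_nonneg: "\<And>x. x \<in> space M \<Longrightarrow> 0 \<le> y x" by fastforce
  note mass = mass_inequality[OF q f int nn If ym yge yAE]
  define L where "L = (\<integral>x. y x powr q \<partial>M)"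
  have "L \<le> h * omega_q q (f powr q / h)"
  proof (rule le_h_omega_q[OF q h])
    show "(1 - q) * L + q * (\<integral>x. \<phi> x * y x powr (q - 1) \<partial>M) \<le> f powr q"
      unfolding L_def by (rule mass(3))
    have "integrable M (\<lambda>x. \<phi> x powr q)"
      using Ih h not_integrable_integral_eq by force
    then show "h \<le> q * x powr (q - 1) * (\<integral>x. \<phi> x * y x powr (q - 1) \<partial>M) + (1 - q) * x powr q * L"
      if "0 < x" for x
      unfolding L_def Ih[symmetric] using integral_powr_le_tangent[OF q that nn ypos _ mass(1,2)] by simp
  qed
  have "(\<integral>\<^sup>+x. ennpow (dyadic_max M T \<phi> x) q \<partial>M) = (\<integral>\<^sup>+x. ennreal (y x powr q) \<partial>M)"
  proof (rule nn_integral_cong_AE)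
    show "AE x in M. ennpow (dyadic_max M T \<phi> x) q = ennreal (y x powr q)"
      using yAE AE_space by eventually_elim (simp add: ennpow_def y_nonneg)
  qed
  also have "\<dots> = ennreal L"
    unfolding L_def by (intro nn_integral_eq_integral mass(2)) (auto intro: AE_I2)
  also have "\<dots> \<le> ennreal (h * omega_q q (f powr q / h))"
    using \<open>L \<le> _\<close> by (rule ennreal_leI)
  finally show ?thesis .
qed

section \<open>Extremal functions and the lower bound\<close>

text \<open>Invariant of the greedy selection, after \<open>n\<close> steps, of cells of \<open>I \<in> level m\<^sub>0\<close> with total
  measure \<open>t\<close>.\<close>
definition greedy_cover :: "'a set \<Rightarrow> nat \<Rightarrow> real \<Rightarrow> nat \<Rightarrow> 'a set set \<Rightarrow> bool" where
  "greedy_cover I m0 t n G \<longleftrightarrow> countable G \<and> G \<subseteq> T \<and> (\<forall>K\<in>G. K \<subseteq> I \<and> (\<exists>j\<le>m0+n. K \<in> level j)) \<and>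
     disjoint_family_on (\<lambda>K. K) G \<and> measure M (\<Union>G) \<le> t \<and> t - measure M (\<Union>G) \<le> mesh (m0 + n)"

lemma level_cells_cover_complement:
  assumes I: "I \<in> level m0" and "m0 \<le> n1" and G: "\<forall>K\<in>G. \<exists>j<n1. K \<in> level j"
  shows "I - \<Union>G \<subseteq> \<Union>{K \<in> level n1. K \<subseteq> I \<and> K \<inter> \<Union>G = {}}"
proof
  fix x assume x: "x \<in> I - \<Union>G"
  obtain K where K: "K \<in> level n1" "x \<in> K"
    using level_cover x tree_subset_space I level_subset_tree by blast
  have "K \<subseteq> I" using levels_nested[OF I K(1) assms(2)] x K(2) by auto
  moreover have "K \<inter> K' = {}" if K': "K' \<in> G" for K'
  proof -
    obtain j where j: "j < n1" "K' \<in> level j" using G K' by blast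
    then show ?thesis using levels_nested[OF j(2) K(1)] x K(2) K' by auto
  qed
  ultimately show "x \<in> \<Union>{K \<in> level n1. K \<subseteq> I \<and> K \<inter> \<Union>G = {}}" using K by blast
qed

lemma greedy_cover_step:
  assumes I: "I \<in> level m0" and tI: "t < measure M I" and inv: "greedy_cover I m0 t n G"
  obtains G' where "G \<subseteq> G'" "greedy_cover I m0 t (Suc n) G'"
proof -
  define E where "E = \<Union>G"
  define n1 where "n1 = m0 + Suc n"
  from inv have cG: "countable G" and GT: "G \<subseteq> T"
    and GI: "\<forall>K\<in>G. K \<subseteq> I \<and> (\<exists>j\<le>m0+n. K \<in> level j)"
    and dG: "disjoint_family_on (\<lambda>K. K) G" and mt: "measure M E \<le> t"
    by (auto simp: greedy_cover_def E_def)
  have GI': "\<forall>K\<in>G. K \<subseteq> I \<and> (\<exists>j\<le>m0 + Suc n. K \<in> level j)"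
  proof
    fix K assume "K \<in> G"
    then obtain j where "K \<subseteq> I" "j \<le> m0 + n" "K \<in> level j" using GI by blast
    then show "K \<subseteq> I \<and> (\<exists>j\<le>m0 + Suc n. K \<in> level j)" by (intro conjI exI[of _ j]) auto
  qed
  show ?thesis
  proof (cases "t - measure M E \<le> mesh n1")
    case True
    then have "greedy_cover I m0 t (Suc n) G"
      using inv GI' by (simp add: greedy_cover_def E_def n1_def)
    then show ?thesis using that by blast
  next
    case False
    have Es: "E \<in> sets M" unfolding E_def by (rule Union_tree_family_sets[OF cG GT])
    have IT: "I \<in> T" using I level_subset_tree by blast
    define D where "D = {K \<in> level n1. K \<subseteq> I \<and> K \<inter> E = {}}"
    have DL: "D \<subseteq> level n1" by (auto simp: D_def)
    have cD: "countable D" using countable_subset[OF DL countable_level] .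
    have DT: "D \<subseteq> T" using DL level_subset_tree by blast
    have "\<forall>K\<in>G. \<exists>j<n1. K \<in> level j"
      using GI by (auto simp: n1_def less_Suc_eq_le)
    then have "I - E \<subseteq> \<Union>D"
      unfolding D_def E_def by (intro level_cells_cover_complement[OF I]) (simp_all add: n1_def)
    then have "measure M (I - E) \<le> measure M (\<Union>D)"
      by (intro finite_measure_mono Union_tree_family_sets cD DT)
    moreover have "measure M (I - E) = measure M I - measure M E"
      using GI Es tree_sets[OF IT] by (intro finite_measure_Diff) (auto simp: E_def)
    ultimately have gap: "t - measure M E < measure M (\<Union>D)" using tI by simp
    have "D \<subseteq> sets M" using DT tree_sets by blast
    moreover have "measure M K \<le> mesh n1" if "K \<in> D" for K using DL measure_le_mesh that by blast
    moreover have "0 \<le> t - measure M E" using mt by simp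
    ultimately obtain P where PD: "P \<subseteq> D" and Pd: "measure M (\<Union>P) \<le> t - measure M E"
      and Pgap: "t - measure M E - measure M (\<Union>P) < mesh n1"
      using countable_subfamily_measure_approx[OF cD _ _ _ gap] by metis
    have cP: "countable P" using countable_subset[OF PD cD] .
    have PT: "P \<subseteq> T" using PD DT by blast
    have PE: "E \<inter> \<Union>P = {}" using PD by (auto simp: D_def)
    have "measure M (\<Union>(G \<union> P)) = measure M E + measure M (\<Union>P)"
      using finite_measure_Union[OF Es Union_tree_family_sets[OF cP PT] PE] by (simp add: E_def)
    moreover have "disjoint_family_on (\<lambda>K. K) P"
      using level_disjoint PD DL unfolding disjoint_family_on_def by blast
    then have "disjoint_family_on (\<lambda>K. K) (G \<union> P)"
      using disjoint_family_on_Un dG PE by (simp add: E_def)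
    moreover have "\<forall>K\<in>P. K \<subseteq> I \<and> (\<exists>j\<le>m0 + Suc n. K \<in> level j)"
      using PD unfolding D_def n1_def by blast
    ultimately have "greedy_cover I m0 t (Suc n) (G \<union> P)"
      using cG cP GT PT GI' Pd Pgap by (auto simp: greedy_cover_def n1_def)
    then show ?thesis using that by blast
  qed
qed

lemma exists_subcells_measure:
  assumes IT: "I \<in> T" and t: "0 \<le> t" "t < measure M I"
  obtains G where "countable G" "G \<subseteq> T" "disjoint_family_on (\<lambda>K. K) G" "\<forall>K\<in>G. K \<subseteq> I"
    "measure M (\<Union>G) = t"
proof -
  obtain m0 where I: "I \<in> level m0" using tree_in_level[OF IT] by blast
  have "greedy_cover I m0 t 0 {}"
    using t measure_le_mesh[OF I] by (simp add: greedy_cover_def disjoint_family_on_def)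
  then obtain g where g: "\<And>n. greedy_cover I m0 t n (g n)" "\<And>n. g n \<subseteq> g (Suc n)"
    using dependent_nat_choice[of "greedy_cover I m0 t" "\<lambda>n G G'. G \<subseteq> G'"]
      greedy_cover_step[OF I t(2)] by metis
  have gmono: "g a \<subseteq> g b" if "a \<le> b" for a b using lift_Suc_mono_le[of g, OF g(2) that] .
  define G where "G = (\<Union>n. g n)"
  have cg: "countable (g n)" and gT: "g n \<subseteq> T" and gI: "\<forall>K\<in>g n. K \<subseteq> I"
    and gd: "disjoint_family_on (\<lambda>K. K) (g n)" and gm: "measure M (\<Union>(g n)) \<le> t"
    and gs: "t - measure M (\<Union>(g n)) \<le> mesh (m0 + n)" for n
    using g(1)[of n] by (auto simp: greedy_cover_def)
  have dG: "disjoint_family_on (\<lambda>K. K) G"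
  proof (unfold disjoint_family_on_def, intro ballI impI)
    fix K1 K2 assume "K1 \<in> G" "K2 \<in> G" "K1 \<noteq> K2"
    then obtain a b where "K1 \<in> g a" "K2 \<in> g b" by (auto simp: G_def)
    then have "K1 \<in> g (max a b)" "K2 \<in> g (max a b)" using gmono[of a "max a b"] gmono[of b "max a b"] by auto
    then show "K1 \<inter> K2 = {}" using gd[of "max a b"] \<open>K1 \<noteq> K2\<close> by (auto simp: disjoint_family_on_def)
  qed
  have "incseq (\<lambda>n. \<Union>(g n))" unfolding incseq_def using gmono by (meson Union_mono)
  then have "(\<lambda>n. measure M (\<Union>(g n))) \<longlonglongrightarrow> measure M (\<Union>n. \<Union>(g n))"
    using Union_tree_family_sets cg gT by (intro finite_Lim_measure_incseq) auto
  moreover have "(\<lambda>n. measure M (\<Union>(g n))) \<longlonglongrightarrow> t"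
  proof (rule tendsto_sandwich[of "\<lambda>n. t - mesh (m0 + n)" _ _ "\<lambda>n. t"])
    have "(\<lambda>n. mesh (n + m0)) \<longlonglongrightarrow> 0" using LIMSEQ_ignore_initial_segment[OF mesh_tendsto_0] .
    then show "(\<lambda>n. t - mesh (m0 + n)) \<longlonglongrightarrow> t"
      using tendsto_diff[OF tendsto_const, of _ 0 sequentially t] by (simp add: add.commute)
  qed (use gs gm in \<open>auto simp: algebra_simps\<close>)
  moreover have "(\<Union>n. \<Union>(g n)) = \<Union>G" by (auto simp: G_def)
  ultimately have "measure M (\<Union>G) = t" using LIMSEQ_unique by metis
  moreover have "countable G" "G \<subseteq> T" "\<forall>K\<in>G. K \<subseteq> I" using cg gT gI by (auto simp: G_def)
  ultimately show ?thesis using that dG by blast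
qed

text \<open>\<open>nest_set b k\<close> is the set \<open>A\<^sub>k\<close> of the construction sketched at the top, and
  \<open>nest_layer b k = A\<^sub>k - A\<^sub>k\<^sub>+\<^sub>1\<close>.\<close>
definition fraction_cells :: "real \<Rightarrow> 'a set \<Rightarrow> 'a set set \<Rightarrow> bool" where
  "fraction_cells b I G \<longleftrightarrow> countable G \<and> G \<subseteq> T \<and> disjoint_family_on (\<lambda>K. K) G \<and> (\<forall>K\<in>G. K \<subseteq> I)
     \<and> measure M (\<Union>G) = b * measure M I"

definition choose_fraction_cells :: "real \<Rightarrow> 'a set \<Rightarrow> 'a set set" where
  "choose_fraction_cells b I = (SOME G. fraction_cells b I G)"

primrec nest_cells :: "real \<Rightarrow> nat \<Rightarrow> 'a set set" where
  "nest_cells b 0 = {space M}"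
| "nest_cells b (Suc k) = (\<Union>J\<in>nest_cells b k. choose_fraction_cells b J)"

definition nest_set :: "real \<Rightarrow> nat \<Rightarrow> 'a set" where
  "nest_set b k = \<Union>(nest_cells b k)"

definition nest_layer :: "real \<Rightarrow> nat \<Rightarrow> 'a set" where
  "nest_layer b k = nest_set b k - nest_set b (Suc k)"

definition extremal_fn :: "real \<Rightarrow> real \<Rightarrow> real \<Rightarrow> 'a \<Rightarrow> real" where
  "extremal_fn b c r x = (\<Sum>k. c * r ^ k * indicator (nest_layer b k) x)"

context
  fixes b :: real
  assumes b: "0 < b" "b < 1"
begin

lemma choose_fraction_cells_spec:
  assumes I: "I \<in> T"
  shows "fraction_cells b I (choose_fraction_cells b I)"
proof -
  have "0 \<le> b * measure M I" using b by simp
  moreover have "b * measure M I < measure M I" using b tree_measure_pos[OF I] by simp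
  ultimately obtain G where "countable G" "G \<subseteq> T" "disjoint_family_on (\<lambda>K. K) G" "\<forall>K\<in>G. K \<subseteq> I"
    "measure M (\<Union>G) = b * measure M I"
    using exists_subcells_measure[OF I] by blast
  then have "\<exists>G. fraction_cells b I G" by (auto simp: fraction_cells_def)
  then show ?thesis unfolding choose_fraction_cells_def by (rule someI_ex)
qed

lemma nest_cells_subset_tree: "nest_cells b k \<subseteq> T"
proof (induction k)
  case 0 then show ?case using space_in_tree by simp
next
  case (Suc k)
  have "choose_fraction_cells b J \<subseteq> T" if "J \<in> nest_cells b k" for J
    using choose_fraction_cells_spec[of J] Suc that by (auto simp: fraction_cells_def)
  then show ?case by auto
qed

lemma countable_nest_cells: "countable (nest_cells b k)"
proof (induction k)
  case 0 then show ?case by simp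
next
  case (Suc k)
  have "countable (choose_fraction_cells b J)" if "J \<in> nest_cells b k" for J
    using choose_fraction_cells_spec nest_cells_subset_tree that by (auto simp: fraction_cells_def)
  then show ?case using Suc by auto
qed

lemma choose_fraction_cells_subset: "J \<in> T \<Longrightarrow> K \<in> choose_fraction_cells b J \<Longrightarrow> K \<subseteq> J"
  using choose_fraction_cells_spec by (auto simp: fraction_cells_def)

lemma nest_cells_disjoint: "J1 \<in> nest_cells b k \<Longrightarrow> J2 \<in> nest_cells b k \<Longrightarrow> J1 \<noteq> J2 \<Longrightarrow> J1 \<inter> J2 = {}"
proof (induction k arbitrary: J1 J2)
  case 0 then show ?case by simp
next
  case (Suc k)
  from Suc.prems obtain I1 I2
    where I1: "I1 \<in> nest_cells b k" "J1 \<in> choose_fraction_cells b I1"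
      and I2: "I2 \<in> nest_cells b k" "J2 \<in> choose_fraction_cells b I2"
    by auto
  have I1T: "I1 \<in> T" and I2T: "I2 \<in> T" using I1 I2 nest_cells_subset_tree by blast+
  show ?case
  proof (cases "I1 = I2")
    case True
    then show ?thesis using choose_fraction_cells_spec[OF I1T] I1 I2 Suc.prems
      by (auto simp: fraction_cells_def disjoint_family_on_def)
  next
    case False
    then have "I1 \<inter> I2 = {}" using Suc.IH I1 I2 by blast
    moreover have "J1 \<subseteq> I1" "J2 \<subseteq> I2" using choose_fraction_cells_subset I1 I2 I1T I2T by blast+
    ultimately show ?thesis by blast
  qed
qed

lemma nest_set_sets: "nest_set b k \<in> sets M"
  unfolding nest_set_def using countable_nest_cells nest_cells_subset_tree by (rule Union_tree_family_sets)

lemma nest_set_Suc_subset: "nest_set b (Suc k) \<subseteq> nest_set b k"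
  unfolding nest_set_def using choose_fraction_cells_subset nest_cells_subset_tree by fastforce

lemma nest_set_antimono: "k \<le> k' \<Longrightarrow> nest_set b k' \<subseteq> nest_set b k"
proof (induction k' rule: dec_induct)
  case base then show ?case by simp
next
  case (step n) then show ?case using nest_set_Suc_subset[of n] by blast
qed

lemma cell_Int_nest_set_eq:
  assumes J: "J \<in> nest_cells b k"
  shows "J \<inter> nest_set b (Suc k + m) = (\<Union>K\<in>choose_fraction_cells b J. K \<inter> nest_set b (Suc k + m))"
proof
  have JT: "J \<in> T" using J nest_cells_subset_tree by blast
  show "J \<inter> nest_set b (Suc k + m) \<subseteq> (\<Union>K\<in>choose_fraction_cells b J. K \<inter> nest_set b (Suc k + m))"
  proof
    fix x assume x: "x \<in> J \<inter> nest_set b (Suc k + m)"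
    then have "x \<in> nest_set b (Suc k)" using nest_set_antimono[of "Suc k" "Suc k + m"] by auto
    then obtain J' K where J': "J' \<in> nest_cells b k" "K \<in> choose_fraction_cells b J'" "x \<in> K"
      by (auto simp: nest_set_def)
    have "K \<subseteq> J'" using choose_fraction_cells_subset J' nest_cells_subset_tree by blast
    then have "J' = J" using nest_cells_disjoint[OF J'(1) J] x J'(3) by blast
    then show "x \<in> (\<Union>K\<in>choose_fraction_cells b J. K \<inter> nest_set b (Suc k + m))" using J' x by blast
  qed
  show "(\<Union>K\<in>choose_fraction_cells b J. K \<inter> nest_set b (Suc k + m)) \<subseteq> J \<inter> nest_set b (Suc k + m)"
    using choose_fraction_cells_subset JT by blast
qed

lemma measure_cell_Int_nest_set:
  "J \<in> nest_cells b k \<Longrightarrow> measure M (J \<inter> nest_set b (k + m)) = b ^ m * measure M J"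
proof (induction m arbitrary: k J)
  case 0
  then have "J \<subseteq> nest_set b k" by (auto simp: nest_set_def)
  then show ?case by (simp add: Int_absorb2)
next
  case (Suc m)
  have JT: "J \<in> T" using Suc.prems nest_cells_subset_tree by blast
  have fP: "fraction_cells b J (choose_fraction_cells b J)" using choose_fraction_cells_spec[OF JT] .
  define G where "G = choose_fraction_cells b J"
  have cG: "countable G" and GT: "G \<subseteq> T" and dG: "disjoint_family_on (\<lambda>K. K) G"
    and mG: "measure M (\<Union>G) = b * measure M J"
    using fP by (auto simp: fraction_cells_def G_def)
  have GF: "G \<subseteq> nest_cells b (Suc k)" using Suc.prems by (auto simp: G_def)
  have eqs: "J \<inter> nest_set b (k + Suc m) = (\<Union>K\<in>G. K \<inter> nest_set b (Suc k + m))"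
    using cell_Int_nest_set_eq[OF Suc.prems, of m] by (simp add: G_def)
  have dG2: "disjoint_family_on (\<lambda>K. K \<inter> nest_set b (Suc k + m)) G"
    using dG by (auto simp: disjoint_family_on_def)
  have sets2: "K \<inter> nest_set b (Suc k + m) \<in> sets M" if "K \<in> G" for K
    using GT that tree_sets nest_set_sets by blast
  have "emeasure M (J \<inter> nest_set b (k + Suc m))
      = (\<integral>\<^sup>+K. emeasure M (K \<inter> nest_set b (Suc k + m)) \<partial>count_space G)"
    unfolding eqs by (rule emeasure_UN_countable[OF sets2 cG dG2])
  also have "\<dots> = (\<integral>\<^sup>+K. ennreal (b ^ m) * emeasure M K \<partial>count_space G)"
  proof (rule nn_integral_cong)
    fix K assume "K \<in> space (count_space G)"
    then have K: "K \<in> G" by simp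
    then have "measure M (K \<inter> nest_set b (Suc k + m)) = b ^ m * measure M K" using Suc.IH GF by blast
    then show "emeasure M (K \<inter> nest_set b (Suc k + m)) = ennreal (b ^ m) * emeasure M K"
      using b by (simp add: emeasure_eq_measure ennreal_mult)
  qed
  also have "\<dots> = ennreal (b ^ m) * (\<integral>\<^sup>+K. emeasure M K \<partial>count_space G)"
    by (simp add: nn_integral_cmult)
  also have "(\<integral>\<^sup>+K. emeasure M K \<partial>count_space G) = emeasure M (\<Union>G)"
    using emeasure_UN_countable[of G "\<lambda>K. K" M] cG dG GT tree_sets by (auto simp: subset_eq)
  also have "ennreal (b ^ m) * emeasure M (\<Union>G) = ennreal (b ^ Suc m * measure M J)"
    using mG b by (simp add: emeasure_eq_measure ennreal_mult[symmetric] mult.assoc)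
  finally show ?case using b by (simp add: emeasure_eq_measure)
qed

lemma nest_layer_sets: "nest_layer b k \<in> sets M"
  unfolding nest_layer_def using nest_set_sets by auto

lemma nest_layer_disjoint: "j \<noteq> k \<Longrightarrow> nest_layer b j \<inter> nest_layer b k = {}"
proof -
  have *: "nest_layer b j \<inter> nest_layer b k = {}" if "j < k" for j k
  proof -
    have "nest_set b k \<subseteq> nest_set b (Suc j)" using nest_set_antimono[of "Suc j" k] that by simp
    then show ?thesis by (auto simp: nest_layer_def)
  qed
  assume "j \<noteq> k"
  then consider "j < k" | "k < j" by linarith
  then show ?thesis by cases (use * in blast)+
qed

lemma measure_cell_Int_nest_layer:
  assumes J: "J \<in> nest_cells b k"
  shows "measure M (J \<inter> nest_layer b j) = (if j < k then 0 else b ^ (j - k) * (1 - b) * measure M J)"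
proof (cases "j < k")
  case True
  have "J \<subseteq> nest_set b k" using J by (auto simp: nest_set_def)
  also have "nest_set b k \<subseteq> nest_set b (Suc j)" using nest_set_antimono[of "Suc j" k] True by simp
  finally have "J \<inter> nest_layer b j = {}" by (auto simp: nest_layer_def)
  then show ?thesis using True by simp
next
  case False
  have JT: "J \<in> T" using J nest_cells_subset_tree by blast
  have eq: "J \<inter> nest_layer b j = (J \<inter> nest_set b (k + (j - k))) - (J \<inter> nest_set b (k + Suc (j - k)))"
    using False by (auto simp: nest_layer_def)
  have "measure M (J \<inter> nest_layer b j)
      = measure M (J \<inter> nest_set b (k + (j - k))) - measure M (J \<inter> nest_set b (k + Suc (j - k)))"
    unfolding eq
    using tree_sets[OF JT] nest_set_sets nest_set_Suc_subset[of "k + (j - k)"]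
    by (intro finite_measure_Diff) auto
  also have "\<dots> = b ^ (j - k) * (1 - b) * measure M J"
  proof -
    have a1: "measure M (J \<inter> nest_set b (k + (j - k)))
        = b ^ (j - k) * measure M J" by (rule measure_cell_Int_nest_set[OF J])
    have a2: "measure M (J \<inter> nest_set b (k + Suc (j - k)))
        = b ^ Suc (j - k) * measure M J" by (rule measure_cell_Int_nest_set[OF J])
    show ?thesis unfolding a1 a2 by (simp add: algebra_simps)
  qed
  finally show ?thesis using False by simp
qed

lemma measure_nest_layer: "measure M (nest_layer b k) = b ^ k * (1 - b)"
  using measure_cell_Int_nest_layer[of "space M" 0 k] sets.sets_into_space[OF nest_layer_sets[of k]]
  by (simp add: Int_absorb1 prob_space)

lemma extremal_fn_on_layer: "x \<in> nest_layer b k \<Longrightarrow> extremal_fn b c r x = c * r ^ k"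
proof -
  assume k: "x \<in> nest_layer b k"
  have z: "j \<noteq> k \<Longrightarrow> x \<notin> nest_layer b j" for j using nest_layer_disjoint[of j k] k by blast
  have "extremal_fn b c r x = (\<Sum>j\<in>{k}. c * r ^ j * indicator (nest_layer b j) x)"
    unfolding extremal_fn_def by (rule suminf_finite) (use z in auto)
  then show ?thesis using k by simp
qed

lemma ennreal_comp_extremal_fn:
  fixes G :: "real \<Rightarrow> real"
  assumes G0: "G 0 = 0"
  shows "ennreal (G (extremal_fn b c r x)) = (\<Sum>k. ennreal (G (c * r ^ k)) * indicator (nest_layer b k) x)"
proof (cases "\<exists>k. x \<in> nest_layer b k")
  case True
  then obtain k where k: "x \<in> nest_layer b k" by blast
  have "j \<noteq> k \<Longrightarrow> x \<notin> nest_layer b j" for j using nest_layer_disjoint[of j k] k by blast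
  then have "(\<Sum>j. ennreal (G (c * r ^ j)) * indicator (nest_layer b j) x)
      = (\<Sum>j\<in>{k}. ennreal (G (c * r ^ j)) * indicator (nest_layer b j) x)"
    by (intro suminf_finite) auto
  then show ?thesis using extremal_fn_on_layer[OF k] k by simp
qed (simp add: extremal_fn_def G0)

lemma extremal_fn_measurable: "extremal_fn b c r \<in> borel_measurable M"
  unfolding extremal_fn_def using nest_layer_sets by measurable

lemma extremal_fn_nonneg: "0 \<le> c \<Longrightarrow> 0 \<le> r \<Longrightarrow> 0 \<le> extremal_fn b c r x"
proof (cases "\<exists>k. x \<in> nest_layer b k")
  case True
  assume "0 \<le> c" "0 \<le> r"
  then show ?thesis using True extremal_fn_on_layer by auto
next
  case False
  then show ?thesis by (simp add: extremal_fn_def)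
qed

lemma nn_integral_comp_extremal_fn:
  fixes G :: "real \<Rightarrow> real"
  assumes G0: "G 0 = 0" and Gnn: "\<And>k. 0 \<le> G (c * r ^ k)"
  shows "(\<integral>\<^sup>+x. ennreal (G (extremal_fn b c r x)) \<partial>M) = (\<Sum>k. ennreal (G (c * r ^ k) * (b ^ k * (1 - b))))"
proof -
  have "(\<integral>\<^sup>+x. ennreal (G (extremal_fn b c r x)) \<partial>M)
      = (\<integral>\<^sup>+x. (\<Sum>k. ennreal (G (c * r ^ k)) * indicator (nest_layer b k) x) \<partial>M)"
    by (intro nn_integral_cong) (simp add: ennreal_comp_extremal_fn[of G, OF G0])
  also have "\<dots> = (\<Sum>k. (\<integral>\<^sup>+x. ennreal (G (c * r ^ k)) * indicator (nest_layer b k) x \<partial>M))"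
    by (rule nn_integral_suminf) (use nest_layer_sets in measurable)
  also have "\<dots> = (\<Sum>k. ennreal (G (c * r ^ k) * (b ^ k * (1 - b))))"
  proof (intro suminf_cong)
    fix k
    have "(\<integral>\<^sup>+x. ennreal (G (c * r ^ k)) * indicator (nest_layer b k) x \<partial>M)
        = ennreal (G (c * r ^ k)) * emeasure M (nest_layer b k)"
      by (rule nn_integral_cmult_indicator[OF nest_layer_sets])
    also have "\<dots> = ennreal (G (c * r ^ k) * (b ^ k * (1 - b)))"
      using Gnn[of k] b by (simp add: emeasure_eq_measure measure_nest_layer ennreal_mult)
    finally show "(\<integral>\<^sup>+x. ennreal (G (c * r ^ k)) * indicator (nest_layer b k) x \<partial>M)
        = ennreal (G (c * r ^ k) * (b ^ k * (1 - b)))" .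
  qed
  finally show ?thesis .
qed

lemma nn_integral_extremal_fn_cell:
  assumes J: "J \<in> nest_cells b k" and c: "0 \<le> c" and r: "0 \<le> r"
  shows "(\<integral>\<^sup>+x. ennreal \<bar>extremal_fn b c r x\<bar> * indicator J x \<partial>M)
     = (\<Sum>j. ennreal (c * r ^ j * (if j < k then 0 else b ^ (j - k) * (1 - b) * measure M J)))"
proof -
  have JT: "J \<in> T" using J nest_cells_subset_tree by blast
  have Js: "J \<in> sets M" using tree_sets[OF JT] .
  have "(\<integral>\<^sup>+x. ennreal \<bar>extremal_fn b c r x\<bar> * indicator J x \<partial>M)
      = (\<integral>\<^sup>+x. (\<Sum>j. ennreal (c * r ^ j) * indicator (J \<inter> nest_layer b j) x) \<partial>M)"
  proof (intro nn_integral_cong)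
    fix x
    have "ennreal \<bar>extremal_fn b c r x\<bar> = (\<Sum>j. ennreal \<bar>c * r ^ j\<bar> * indicator (nest_layer b j) x)"
      by (rule ennreal_comp_extremal_fn) simp
    then have "ennreal \<bar>extremal_fn b c r x\<bar> * indicator J x
        = (\<Sum>j. ennreal \<bar>c * r ^ j\<bar> * indicator (nest_layer b j) x) * indicator J x"
      by simp
    also have "\<dots> = (\<Sum>j. ennreal \<bar>c * r ^ j\<bar> * indicator (nest_layer b j) x * indicator J x)"
      by (simp add: ennreal_suminf_multc)
    also have "\<dots> = (\<Sum>j. ennreal (c * r ^ j) * indicator (J \<inter> nest_layer b j) x)"
      using c r by (intro suminf_cong) (auto simp: indicator_def)
    finally show "ennreal \<bar>extremal_fn b c r x\<bar> * indicator J x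
        = (\<Sum>j. ennreal (c * r ^ j) * indicator (J \<inter> nest_layer b j) x)" .
  qed
  also have "\<dots> = (\<Sum>j. (\<integral>\<^sup>+x. ennreal (c * r ^ j) * indicator (J \<inter> nest_layer b j) x \<partial>M))"
    by (rule nn_integral_suminf) (use nest_layer_sets Js in measurable)
  also have "\<dots> = (\<Sum>j. ennreal (c * r ^ j * (if j < k then 0 else b ^ (j - k) * (1 - b) * measure M J)))"
  proof (intro suminf_cong)
    fix j
    have "(\<integral>\<^sup>+x. ennreal (c * r ^ j) * indicator (J \<inter> nest_layer b j) x \<partial>M)
        = ennreal (c * r ^ j) * emeasure M (J \<inter> nest_layer b j)"
      using nest_layer_sets Js by (intro nn_integral_cmult_indicator) auto
    also have "\<dots> = ennreal (c * r ^ j * (if j < k then 0 else b ^ (j - k) * (1 - b) * measure M J))"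
      using c r b by (simp add: emeasure_eq_measure measure_cell_Int_nest_layer[OF J] ennreal_mult)
    finally show "(\<integral>\<^sup>+x. ennreal (c * r ^ j) * indicator (J \<inter> nest_layer b j) x \<partial>M)
        = ennreal (c * r ^ j * (if j < k then 0 else b ^ (j - k) * (1 - b) * measure M J))" .
  qed
  finally show ?thesis .
qed

lemma cell_mean_extremal_fn:
  assumes J: "J \<in> nest_cells b k" and c: "0 \<le> c" and r: "0 \<le> r" and rb: "r * b < 1"
  shows "cell_mean (extremal_fn b c r) J = ennreal (c * (1 - b) / (1 - r * b) * r ^ k)"
proof -
  have JT: "J \<in> T" using J nest_cells_subset_tree by blast
  have mJ: "0 < measure M J" using tree_measure_pos[OF JT] .
  have "cell_mean (extremal_fn b c r) J
      = ennreal (1 / measure M J) * ennreal (c * r ^ k * (1 - b) * measure M J / (1 - r * b))"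
    unfolding cell_mean_def nn_integral_extremal_fn_cell[OF J c r]
      suminf_ennreal_shifted_geometric[OF c r b rb measure_nonneg] ..
  also have "\<dots> = ennreal (1 / measure M J * (c * r ^ k * (1 - b) * measure M J / (1 - r * b)))"
    by (rule ennreal_mult'[symmetric]) (use mJ in simp)
  also have "1 / measure M J * (c * r ^ k * (1 - b) * measure M J / (1 - r * b))
      = c * (1 - b) / (1 - r * b) * r ^ k"
  proof -
    have aux: "1 / m * (A * m / D) = A / D" if "m \<noteq> 0" "D \<noteq> 0" for m A D :: real
      using that by (simp add: field_simps)
    have "1 - r * b \<noteq> 0" using rb by simp
    then show ?thesis using aux[of "measure M J" "1 - r * b" "c * r ^ k * (1 - b)"] mJ
      by (simp add: algebra_simps)
  qed
  finally show ?thesis .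
qed

lemma nn_integral_extremal_fn:
  assumes c: "0 \<le> c" and r: "0 < r" and rb: "r * b < 1"
  shows "(\<integral>\<^sup>+x. ennreal (extremal_fn b c r x) \<partial>M) = ennreal (c * (1 - b) / (1 - r * b))"
proof -
  have "(\<integral>\<^sup>+x. ennreal ((\<lambda>v. v) (extremal_fn b c r x)) \<partial>M) = (\<Sum>k. ennreal (c * r ^ k * (b ^ k * (1 - b))))"
    by (rule nn_integral_comp_extremal_fn) (use c r in auto)
  also have "\<dots> = (\<Sum>k. ennreal (c * (1 - b) * (r * b) ^ k))"
    by (simp add: power_mult_distrib algebra_simps)
  also have "\<dots> = ennreal (c * (1 - b) / (1 - r * b))"
    using c r b rb by (intro suminf_ennreal_geometric) auto
  finally show ?thesis by simp
qed

lemma nn_integral_extremal_fn_powr: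
  assumes q: "0 < q" and c: "0 \<le> c" and r: "0 < r" and rqb: "r powr q * b < 1"
  shows "(\<integral>\<^sup>+x. ennreal (extremal_fn b c r x powr q) \<partial>M) = ennreal (c powr q * (1 - b) / (1 - r powr q * b))"
proof -
  have "(\<integral>\<^sup>+x. ennreal ((\<lambda>v. v powr q) (extremal_fn b c r x)) \<partial>M)
      = (\<Sum>k. ennreal ((c * r ^ k) powr q * (b ^ k * (1 - b))))"
    by (rule nn_integral_comp_extremal_fn) (use c r in auto)
  also have "\<dots> = (\<Sum>k. ennreal (c powr q * (1 - b) * (r powr q * b) ^ k))"
    using c r by (simp add: powr_mult_power power_mult_distrib algebra_simps)
  also have "\<dots> = ennreal (c powr q * (1 - b) / (1 - r powr q * b))"
    using c r b rqb by (intro suminf_ennreal_geometric) auto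
  finally show ?thesis by simp
qed

text \<open>\<open>\<M>\<^sub>\<T>\<phi> \<ge> w \<phi>\<close> with \<open>w = (1 - b)/(1 - r b)\<close>: on the \<open>k\<close>-th layer, the mean of \<open>\<phi>\<close> over the
  generation-\<open>k\<close> cell containing the point is \<open>w c r\<^sup>k\<close>.\<close>
lemma dyadic_max_extremal_fn_ge:
  assumes x: "x \<in> space M" and c: "0 \<le> c" and r: "0 \<le> r" and rb: "r * b < 1"
  shows "ennreal ((1 - b) / (1 - r * b) * extremal_fn b c r x) \<le> dyadic_max M T (extremal_fn b c r) x"
proof (cases "\<exists>k. x \<in> nest_layer b k")
  case True
  then obtain k where k: "x \<in> nest_layer b k" by blast
  then obtain J where J: "J \<in> nest_cells b k" "x \<in> J" by (auto simp: nest_layer_def nest_set_def)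
  have "ennreal ((1 - b) / (1 - r * b) * extremal_fn b c r x) = cell_mean (extremal_fn b c r) J"
    using cell_mean_extremal_fn[OF J(1) c r rb] extremal_fn_on_layer[OF k] by (simp add: mult_ac)
  also have "\<dots> \<le> dyadic_max M T (extremal_fn b c r) x"
    using J nest_cells_subset_tree by (intro cell_mean_le_dyadic_max) auto
  finally show ?thesis .
qed (simp add: extremal_fn_def)


lemma nn_integral_ennpow_dyadic_max_extremal_fn_ge:
  assumes q: "0 < q" and c: "0 \<le> c" and r: "0 \<le> r" and rb: "r * b < 1"
  shows "ennreal (((1 - b) / (1 - r * b)) powr q) * (\<integral>\<^sup>+x. ennreal (extremal_fn b c r x powr q) \<partial>M)
    \<le> (\<integral>\<^sup>+x. ennpow (dyadic_max M T (extremal_fn b c r) x) q \<partial>M)"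
proof -
  define w where "w = (1 - b) / (1 - r * b)"
  have w0: "0 < w" using b rb by (simp add: w_def)
  have "ennreal (w powr q) * (\<integral>\<^sup>+x. ennreal (extremal_fn b c r x powr q) \<partial>M)
      = (\<integral>\<^sup>+x. ennreal (w powr q) * ennreal (extremal_fn b c r x powr q) \<partial>M)"
    using extremal_fn_measurable by (intro nn_integral_cmult[symmetric]) measurable
  also have "\<dots> \<le> (\<integral>\<^sup>+x. ennpow (dyadic_max M T (extremal_fn b c r) x) q \<partial>M)"
  proof (rule nn_integral_mono)
    fix x assume x: "x \<in> space M"
    have nn: "0 \<le> extremal_fn b c r x" using extremal_fn_nonneg c r .
    have "ennreal (w powr q) * ennreal (extremal_fn b c r x powr q) = ennreal ((w * extremal_fn b c r x) powr q)"
      using w0 nn by (simp add: powr_mult ennreal_mult)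
    also have "\<dots> \<le> ennpow (dyadic_max M T (extremal_fn b c r) x) q"
      using dyadic_max_extremal_fn_ge[OF x c r rb, folded w_def] w0 nn q
      by (intro ennreal_powr_le_ennpow) simp_all
    finally show "ennreal (w powr q) * ennreal (extremal_fn b c r x powr q)
        \<le> ennpow (dyadic_max M T (extremal_fn b c r) x) q" .
  qed
  finally show ?thesis by (simp add: w_def)
qed
end

lemma Bellman_q_ge_extremal:
  fixes q f h b r :: real
  assumes q: "0 < q" "q < 1" and f: "0 < f" and h: "0 < h"
    and b: "0 < b" "b < 1" and r: "1 \<le> r" "r * b < 1"
    and ratio: "((1 - b) / (1 - r * b)) powr q * (1 - r powr q * b) / (1 - b) = f powr q / h"
  shows "ennreal (h * ((1 - b) / (1 - r * b)) powr q) \<le> Bellman_q M T q f h"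
proof -
  define w where "w = (1 - b) / (1 - r * b)"
  have w0: "0 < w" using b r by (simp add: w_def)
  define c where "c = f / w"
  have c0: "0 < c" using f w0 by (simp add: c_def)
  have r0: "0 < r" using r by simp
  have "r powr q \<le> r" using powr_mono[of q 1 r] q r by simp
  then have rqb: "r powr q * b < 1" using b r by (meson le_less_trans mult_right_mono less_imp_le)
  have u: "f powr q / h = w powr q * (1 - r powr q * b) / (1 - b)" using ratio by (simp add: w_def)
  have nz: "w powr q \<noteq> 0" "1 - r powr q * b \<noteq> 0" "1 - b \<noteq> 0" "h \<noteq> 0" using w0 rqb b h by auto
  define \<phi> where "\<phi> = extremal_fn b c r"
  have phim[measurable]: "\<phi> \<in> borel_measurable M" unfolding \<phi>_def by (rule extremal_fn_measurable[OF b])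
  have nn: "\<forall>x\<in>space M. 0 \<le> \<phi> x" using extremal_fn_nonneg[OF b] c0 r0 by (simp add: \<phi>_def)
  have "c * (1 - b) / (1 - r * b) = f" using w0 b r by (simp add: c_def w_def)
  then have i1: "(\<integral>\<^sup>+x. ennreal (\<phi> x) \<partial>M) = ennreal f"
    using nn_integral_extremal_fn[OF b, of c r] c0 r0 r by (simp add: \<phi>_def)
  have int: "integrable M \<phi>"
    by (rule integrableI_nn_integral_finite[OF phim _ i1]) (use nn in \<open>auto intro: AE_I2\<close>)
  have If: "(\<integral>x. \<phi> x \<partial>M) = f"
    using nn_integral_eq_integral[OF int] nn i1 f integral_nonneg_AE[of \<phi> M]
    by (simp add: AE_I2)
  have "c powr q * (1 - b) / (1 - r powr q * b) = f powr q / (f powr q / h)"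
    unfolding u using f w0 nz by (simp add: c_def powr_divide field_simps)
  then have i2: "(\<integral>\<^sup>+x. ennreal (\<phi> x powr q) \<partial>M) = ennreal h"
    using nn_integral_extremal_fn_powr[OF b q(1), of c r] c0 r0 rqb h f by (simp add: \<phi>_def)
  have intq: "integrable M (\<lambda>x. \<phi> x powr q)"
    by (rule integrableI_nn_integral_finite[OF _ _ i2]) (auto intro: AE_I2)
  have Ih: "(\<integral>x. \<phi> x powr q \<partial>M) = h"
    using nn_integral_eq_integral[OF intq] i2 h integral_nonneg_AE[of "\<lambda>x. \<phi> x powr q" M]
    by (simp add: AE_I2)
  have "ennreal (h * w powr q) = ennreal (w powr q) * (\<integral>\<^sup>+x. ennreal (\<phi> x powr q) \<partial>M)"
    using i2 h by (simp add: ennreal_mult mult.commute)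
  also have "\<dots> \<le> (\<integral>\<^sup>+x. ennpow (dyadic_max M T \<phi> x) q \<partial>M)"
    unfolding \<phi>_def w_def using c0 r0 r q by (intro nn_integral_ennpow_dyadic_max_extremal_fn_ge b) auto
  also have "\<dots> \<le> Bellman_q M T q f h"
    unfolding Bellman_q_def using int nn If Ih by (intro SUP_upper) auto
  finally show ?thesis by (simp add: w_def)
qed

lemma Bellman_q_ge:
  fixes q f h :: real
  assumes q: "0 < q" "q < 1" and f: "0 < f" and h: "0 < h" and hf: "h \<le> f powr q"
  shows "ennreal (h * omega_q q (f powr q / h)) \<le> Bellman_q M T q f h"
proof (rule ennreal_le_epsilon)
  fix e :: real assume e: "0 < e"
  have "1 \<le> f powr q / h" using hf h by simp
  then obtain b r where br: "0 < b" "b < 1" "1 \<le> r" "r * b < 1"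
    and ratio: "((1 - b) / (1 - r * b)) powr q * (1 - r powr q * b) / (1 - b) = f powr q / h"
    and approx: "omega_q q (f powr q / h) - e / h < ((1 - b) / (1 - r * b)) powr q"
    using extremal_params_exist[OF q _ divide_pos_pos[OF e h]] by metis
  have "h * omega_q q (f powr q / h) \<le> h * ((1 - b) / (1 - r * b)) powr q + e"
    using mult_strict_left_mono[OF approx h] h by (simp add: right_diff_distrib)
  then have "ennreal (h * omega_q q (f powr q / h))
      \<le> ennreal (h * ((1 - b) / (1 - r * b)) powr q) + ennreal e"
    using h e by (simp flip: ennreal_plus)
  also have "\<dots> \<le> Bellman_q M T q f h + ennreal e"
    using Bellman_q_ge_extremal[OF q f h br ratio] by (rule add_right_mono)
  finally show "ennreal (h * omega_q q (f powr q / h)) \<le> Bellman_q M T q f h + ennreal e" .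
qed

lemma Bellman_q_eq:
  fixes q f h :: real
  assumes q: "0 < q" "q < 1" and f: "0 < f" and h: "0 < h" and hf: "h \<le> f powr q"
  shows "Bellman_q M T q f h = ennreal (h * omega_q q (f powr q / h))"
proof (rule antisym)
  show "Bellman_q M T q f h \<le> ennreal (h * omega_q q (f powr q / h))"
    unfolding Bellman_q_def by (rule SUP_least) (use Bellman_integrand_le[OF q f h hf] in auto)
qed (rule Bellman_q_ge[OF assms])

end

theorem theorem1:
  fixes M :: "'a measure" and T :: "'a set set" and q f h :: real
  assumes "prob_space M" and "nonatomic M" and "is_tree M T"
    and "0 < q" and "q < 1"
    and "0 < f" and "0 < h" and "h \<le> f powr q"
  shows "Bellman_q M T q f h = ennreal (h * omega_q q (f powr q / h))"
proof -
  obtain C where "tree_with M T C" using assms(3) by (auto simp: is_tree_def)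
  then interpret dyadic_tree M T C
    using assms(1) by (simp add: dyadic_tree_def dyadic_tree_axioms_def)
  show ?thesis using Bellman_q_eq assms(4-8) by blast
qed

end
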